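(* Let $(T^{E}_{m},T^{\mathbb{K}}_{m})_{m\in M}$ be a strong generator for $(\mathcal{FV},E)$. If one of the following conditions holds, then $\mathcal{FV}(\Omega,E)\subset\mathcal{FV}(\Omega,E)_\kappa$: (a) $\mathcal{FV}(\Omega)$ is a semi-Montel space; (b) for every $f\in\mathcal{FV}(\Omega,E)$, $j\in J$, $m\in M$ there is a precompact set $K\subset E$ with $N_{j,m}(f)\subset K$; (c) $E$ is a semi-Montel space or a Schwartz space; (d) there are a set $X$, a family $\mathfrak{K}$ of sets with $\bigcup_{K\in\mathfrak{K}}K\subset X$ and a map $\pi\colon\bigcup_{m\in M}\omega_m\to X$ such that every $f\in\mathcal{FV}(\Omega,E)$ satisfies: for all $\varepsilon>0$, $j\in J$, $m\in M$, $\alpha\in\mathfrak{A}$ there is $K\in\mathfrak{K}$ with (i) $\sup_{x\in\omega_m,\ \pi(x)\notin K}p_\alpha(T^E_m(f)(x))\nu_{j,m}(x)<\varepsilon$ and (ii) $\{T^E_m(f)(x)\nu_{j,m}(x): x\in\omega_m,\ \pi(x)\in K\}$ is precompact in $E$.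
   Context: $\mathbb{K}\in\{\mathbb{R},\mathbb{C}\}$, $E$ a non-trivial locally convex Hausdorff space over $\mathbb{K}$ with directed fundamental system of seminorms $(p_\alpha)_{\alpha\in\mathfrak{A}}$. Let $\Omega$ be a non-empty set, $J,M$ non-empty index sets, $(\omega_m)_{m\in M}$ non-empty sets and $\nu_{j,m}\colon\omega_m\to[0,\infty)$ such that for all $m$, $x\in\omega_m$ some $\nu_{j,m}(x)>0$. For $Y\in\{\mathbb{K},E\}$ (for $\mathbb{K}$ only $|\cdot|$), let $\operatorname{AP}(\Omega,Y)\subset Y^\Omega$ be a linear subspace and $T^Y_m\colon\operatorname{dom}T^Y_m\to Y^{\omega_m}$ linear maps on linear subspaces $\operatorname{dom}T^Y_m\subset Y^\Omega$. $\mathcal{FV}(\Omega,Y):=\{f\in\operatorname{AP}(\Omega,Y)\cap\bigcap_m\operatorname{dom}T^Y_m: |f|_{j,m,\alpha}:=\sup_{x\in\omega_m}p_\alpha(T^Y_m(f)(x))\nu_{j,m}(x)<\infty\ \forall j,m,\alpha\}$ with these seminorms; $\mathcal{FV}(\Omega):=\mathcal{FV}(\Omega,\mathbb{K})$. Dom-space: Hausdorff, directed seminorms, and for $Y=\mathbb{K}$ all point evaluations $\delta_x$ are in $\mathcal{FV}(\Omega)'$. Generator for $(\mathcal{FV},E)$: $(T^E_m,T^{\mathbb{K}}_m)_{m\in M}$ with $\mathcal{FV}(\Omega)$, $\mathcal{FV}(\Omega,E)$ dom-spaces over the same $J,M,\omega_m,\nu_{j,m}$. Strong: for all $e'\in E'$,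 $f\in\mathcal{FV}(\Omega,E)$, $m$: $e'\circ f\in\operatorname{AP}(\Omega,\mathbb{K})\cap\operatorname{dom}T^{\mathbb{K}}_m$ and $T^{\mathbb{K}}_m(e'\circ f)=e'\circ T^E_m(f)$ on $\omega_m$. $\mathcal{FV}(\Omega,E)_\sigma:=\{f\colon\Omega\to E: e'\circ f\in\mathcal{FV}(\Omega)\ \forall e'\in E'\}$, $R_f(e'):=e'\circ f$; $B_\alpha:=\{x\in E: p_\alpha(x)<1\}$ with polar $B_\alpha^\circ$; $\mathcal{FV}(\Omega,E)_\kappa:=\{f\in\mathcal{FV}(\Omega,E)_\sigma: R_f(B_\alpha^\circ)$ relatively compact in $\mathcal{FV}(\Omega)$ for every $\alpha\}$. $N_{j,m}(f):=\{T^E_m(f)(x)\nu_{j,m}(x): x\in\omega_m\}$. *)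

theory Defs
  imports "HOL-Analysis.Analysis" "HOL-Library.Function_Algebras"
begin

definition is_seminorm :: "('k::real_normed_field \<Rightarrow> 'v::ab_group_add \<Rightarrow> 'v) \<Rightarrow> ('v \<Rightarrow> real) \<Rightarrow> bool" where
  "is_seminorm sc q \<longleftrightarrow>
     (\<forall>x y. q (x + y) \<le> q x + q y) \<and> (\<forall>c x. q (sc c x) = norm c * q x)"

definition sn_top :: "'v::ab_group_add set \<Rightarrow> ('i \<Rightarrow> 'v \<Rightarrow> real) \<Rightarrow> 'v topology" where
  "sn_top S q = subtopology
     (topology_generated_by {{y. q i (y - x) < e} | i x e. x \<in> S \<and> e > 0}) S"

definition precompact_in :: "'v::ab_group_add topology \<Rightarrow> 'v set \<Rightarrow> bool" where
  "precompact_in T K \<longleftrightarrow>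
     (\<forall>U. openin T U \<and> 0 \<in> U \<longrightarrow> (\<exists>F. finite F \<and> K \<subseteq> (\<Union>x\<in>F. (\<lambda>u. x + u) ` U)))"

definition tvs_bounded :: "('k::real_normed_field \<Rightarrow> 'v::ab_group_add \<Rightarrow> 'v) \<Rightarrow> 'v topology \<Rightarrow> 'v set \<Rightarrow> bool" where
  "tvs_bounded sc T B \<longleftrightarrow>
     (\<forall>U. openin T U \<and> 0 \<in> U \<longrightarrow>
        (\<exists>r>0. \<forall>c. norm c \<ge> r \<longrightarrow> B \<subseteq> sc c ` U))"

definition rel_compact_in :: "'v topology \<Rightarrow> 'v set \<Rightarrow> bool" where
  "rel_compact_in T A \<longleftrightarrow> compactin T (T closure_of A)"

definition semi_montel :: "('k::real_normed_field \<Rightarrow> 'v::ab_group_add \<Rightarrow> 'v) \<Rightarrow> 'v set \<Rightarrow> 'v topology \<Rightarrow> bool" where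
  "semi_montel sc S T \<longleftrightarrow> (\<forall>B. B \<subseteq> S \<and> tvs_bounded sc T B \<longrightarrow> rel_compact_in T B)"

definition schwartz_space :: "('k::real_normed_field \<Rightarrow> 'v::ab_group_add \<Rightarrow> 'v) \<Rightarrow> 'v topology \<Rightarrow> bool" where
  "schwartz_space sc T \<longleftrightarrow>
     (\<forall>U. openin T U \<and> 0 \<in> U \<longrightarrow>
        (\<exists>V. openin T V \<and> 0 \<in> V \<and>
           (\<forall>\<epsilon>::real. \<epsilon> > 0 \<longrightarrow>
              (\<exists>F. finite F \<and> V \<subseteq> (\<Union>x\<in>F. (\<lambda>u. x + u) ` (sc (of_real \<epsilon>) ` U))))))"

definition dual_space :: "('k::real_normed_field \<Rightarrow> 'e::ab_group_add \<Rightarrow> 'e) \<Rightarrow> ('a \<Rightarrow> 'e \<Rightarrow> real) \<Rightarrow> ('e \<Rightarrow> 'k) set" where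
  "dual_space sc p = {e'. Vector_Spaces.linear sc (*) e' \<and>
                            continuous_map (sn_top UNIV p) euclidean e'}"

definition polar :: "('k::real_normed_field \<Rightarrow> 'e::ab_group_add \<Rightarrow> 'e) \<Rightarrow> ('a \<Rightarrow> 'e \<Rightarrow> real) \<Rightarrow> 'e set \<Rightarrow> ('e \<Rightarrow> 'k) set" where
  "polar sc p B = {e' \<in> dual_space sc p. \<forall>x\<in>B. norm (e' x) \<le> 1}"

definition fun_subspace :: "('k::real_normed_field \<Rightarrow> 'y::ab_group_add \<Rightarrow> 'y) \<Rightarrow> ('w \<Rightarrow> 'y) set \<Rightarrow> bool" where
  "fun_subspace sc A \<longleftrightarrow> (\<lambda>_. 0) \<in> A \<and>
     (\<forall>f\<in>A. \<forall>g\<in>A. (\<lambda>w. f w + g w) \<in> A) \<and> (\<forall>c. \<forall>f\<in>A. (\<lambda>w. sc c (f w)) \<in> A)"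

definition lin_on :: "('k::real_normed_field \<Rightarrow> 'y::ab_group_add \<Rightarrow> 'y) \<Rightarrow> ('w \<Rightarrow> 'y) set \<Rightarrow> 'x set
                      \<Rightarrow> (('w \<Rightarrow> 'y) \<Rightarrow> ('x \<Rightarrow> 'y)) \<Rightarrow> bool" where
  "lin_on sc D \<omega> T \<longleftrightarrow>
     (\<forall>f\<in>D. \<forall>g\<in>D. \<forall>x\<in>\<omega>. T (\<lambda>w. f w + g w) x = T f x + T g x) \<and>
     (\<forall>c. \<forall>f\<in>D. \<forall>x\<in>\<omega>. T (\<lambda>w. sc c (f w)) x = sc c (T f x))"

definition FVE :: "('a \<Rightarrow> 'e \<Rightarrow> real) \<Rightarrow> ('w \<Rightarrow> 'e) set \<Rightarrow> ('m \<Rightarrow> ('w \<Rightarrow> 'e) set)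
     \<Rightarrow> ('m \<Rightarrow> ('w \<Rightarrow> 'e) \<Rightarrow> ('x \<Rightarrow> 'e)) \<Rightarrow> ('m \<Rightarrow> 'x set) \<Rightarrow> ('j \<Rightarrow> 'm \<Rightarrow> 'x \<Rightarrow> real)
     \<Rightarrow> ('w \<Rightarrow> 'e) set" where
  "FVE p AP Dm T \<omega> \<nu> = {f. f \<in> AP \<and> (\<forall>m. f \<in> Dm m) \<and>
      (\<forall>j m \<alpha>. bdd_above ((\<lambda>x. p \<alpha> (T m f x) * \<nu> j m x) ` \<omega> m))}"

definition FVE_sn :: "('a \<Rightarrow> 'e \<Rightarrow> real) \<Rightarrow> ('m \<Rightarrow> ('w \<Rightarrow> 'e) \<Rightarrow> ('x \<Rightarrow> 'e)) \<Rightarrow> ('m \<Rightarrow> 'x set)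
     \<Rightarrow> ('j \<Rightarrow> 'm \<Rightarrow> 'x \<Rightarrow> real) \<Rightarrow> 'j \<times> 'm \<times> 'a \<Rightarrow> ('w \<Rightarrow> 'e) \<Rightarrow> real" where
  "FVE_sn p T \<omega> \<nu> i f = (case i of (j, m, \<alpha>) \<Rightarrow> (SUP x\<in>\<omega> m. p \<alpha> (T m f x) * \<nu> j m x))"

definition FVK :: "('w \<Rightarrow> 'k::real_normed_field) set \<Rightarrow> ('m \<Rightarrow> ('w \<Rightarrow> 'k) set)
     \<Rightarrow> ('m \<Rightarrow> ('w \<Rightarrow> 'k) \<Rightarrow> ('x \<Rightarrow> 'k)) \<Rightarrow> ('m \<Rightarrow> 'x set) \<Rightarrow> ('j \<Rightarrow> 'm \<Rightarrow> 'x \<Rightarrow> real)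
     \<Rightarrow> ('w \<Rightarrow> 'k) set" where
  "FVK AP Dm T \<omega> \<nu> = {f. f \<in> AP \<and> (\<forall>m. f \<in> Dm m) \<and>
      (\<forall>j m. bdd_above ((\<lambda>x. norm (T m f x) * \<nu> j m x) ` \<omega> m))}"

definition FVK_sn :: "('m \<Rightarrow> ('w \<Rightarrow> 'k::real_normed_field) \<Rightarrow> ('x \<Rightarrow> 'k)) \<Rightarrow> ('m \<Rightarrow> 'x set)
     \<Rightarrow> ('j \<Rightarrow> 'm \<Rightarrow> 'x \<Rightarrow> real) \<Rightarrow> 'j \<times> 'm \<Rightarrow> ('w \<Rightarrow> 'k) \<Rightarrow> real" where
  "FVK_sn T \<omega> \<nu> i f = (case i of (j, m) \<Rightarrow> (SUP x\<in>\<omega> m. norm (T m f x) * \<nu> j m x))"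

definition sn_hausdorff :: "'v::zero set \<Rightarrow> ('i \<Rightarrow> 'v \<Rightarrow> real) \<Rightarrow> bool" where
  "sn_hausdorff S q \<longleftrightarrow> (\<forall>f\<in>S. f \<noteq> 0 \<longrightarrow> (\<exists>i. q i f \<noteq> 0))"

definition sn_directed :: "'v set \<Rightarrow> ('i \<Rightarrow> 'v \<Rightarrow> real) \<Rightarrow> bool" where
  "sn_directed S q \<longleftrightarrow> (\<forall>i1 i2. \<exists>i3 C. C > 0 \<and> (\<forall>f\<in>S. max (q i1 f) (q i2 f) \<le> C * q i3 f))"

definition FV_sigma :: "('e \<Rightarrow> 'k) set \<Rightarrow> ('w \<Rightarrow> 'k) set \<Rightarrow> ('w \<Rightarrow> 'e) set" where
  "FV_sigma E' FVk = {f. \<forall>e'\<in>E'. e' \<circ> f \<in> FVk}"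

definition FV_kappa :: "('k::real_normed_field \<Rightarrow> 'e::ab_group_add \<Rightarrow> 'e) \<Rightarrow> ('a \<Rightarrow> 'e \<Rightarrow> real)
     \<Rightarrow> ('w \<Rightarrow> 'k) set \<Rightarrow> ('w \<Rightarrow> 'k) topology \<Rightarrow> ('w \<Rightarrow> 'e) set" where
  "FV_kappa sc p FVk Tk = {f \<in> FV_sigma (dual_space sc p) FVk.
      \<forall>\<alpha>. rel_compact_in Tk ((\<lambda>e'. e' \<circ> f) ` polar sc p {x. p \<alpha> x < 1})}"

end

theory Submission
  imports Defs "HOL-Computational_Algebra.Fundamental_Theorem_Algebra"
begin

(* For f in FV(Omega,E), the map e' \<mapsto> e' \<circ> f sends the polar B\<^sub>\<alpha>\<degree> of a seminorm ball
   into FV(Omega).  B\<^sub>\<alpha>\<degree> is compact for the pointwise topology (Alaoglu; closed balls of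
   the scalar field are compact because a real normed field is R or C by the Gelfand-Mazur
   argument).  If every weighted range N\<^sub>j\<^sub>,\<^sub>m(f) is totally bounded for p\<^sub>\<alpha>, which each
   of (b)-(d) guarantees, then e' \<mapsto> e' \<circ> f is continuous on B\<^sub>\<alpha>\<degree>, so the image is compact
   and hence relatively compact in the Hausdorff space FV(Omega).  Under (a) the image is
   bounded in FV(Omega) and the semi-Montel property applies directly. *)

section \<open>Closed balls of a real normed field are compact\<close>

definition rpoly :: "real poly \<Rightarrow> 'k::real_normed_field \<Rightarrow> 'k" where
  "rpoly p = poly (map_poly of_real p)"

lemma map_poly_of_real_add:
  "map_poly (of_real :: real \<Rightarrow> 'k::real_normed_field) (p + q) = map_poly of_real p + map_poly of_real q"
  by (intro poly_eqI) (simp add: coeff_map_poly)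

lemma map_poly_of_real_mult:
  "map_poly (of_real :: real \<Rightarrow> 'k::real_normed_field) (p * q) = map_poly of_real p * map_poly of_real q"
proof (induction p rule: pCons_induct)
  case (pCons a p)
  have "map_poly (of_real :: real \<Rightarrow> 'k) (smult a q) = smult (of_real a) (map_poly of_real q)"
    by (intro poly_eqI) (simp add: coeff_map_poly)
  with pCons show ?case by (simp add: map_poly_of_real_add map_poly_pCons)
qed simp

lemma rpoly_add: "rpoly (p + q) x = rpoly p x + rpoly q x"
  and rpoly_mult: "rpoly (p * q) x = rpoly p x * rpoly q x"
  and rpoly_const: "rpoly [:c:] x = of_real c"
  by (simp_all add: rpoly_def map_poly_of_real_add map_poly_of_real_mult map_poly_pCons)

lemma rpoly_power: "rpoly (p ^ n) x = rpoly p x ^ n"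
  by (induction n) (simp_all add: rpoly_mult, simp add: rpoly_def)

lemma poly_map_poly_complex_of_real:
  "poly (map_poly complex_of_real Q) (complex_of_real t) = complex_of_real (poly Q t)"
  by (induction Q rule: pCons_induct) (simp_all add: map_poly_pCons)

definition conj_pair_poly :: "complex \<Rightarrow> real poly" where
  "conj_pair_poly w = [:(cmod w)\<^sup>2, -2 * Re w, 1:]"

lemma conj_pair_poly_nonzero: "conj_pair_poly w \<noteq> 0"
  and degree_conj_pair_poly: "degree (conj_pair_poly w) = 2"
  and lead_coeff_conj_pair_poly: "lead_coeff (conj_pair_poly w) = 1"
  by (simp_all add: conj_pair_poly_def)

lemma poly_conj_pair_poly_complex:
  "poly (map_poly complex_of_real (conj_pair_poly w)) z = (z - w) * (z - cnj w)"
proof -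
  have "poly (map_poly complex_of_real (conj_pair_poly w)) z
      = of_real ((cmod w)\<^sup>2) + z * (of_real (-2 * Re w) + z)"
    by (simp add: conj_pair_poly_def map_poly_pCons)
  also have "complex_of_real ((cmod w)\<^sup>2) = w * cnj w"
    by (simp add: complex_mult_cnj cmod_power2)
  also have "complex_of_real (-2 * Re w) = - (w + cnj w)"
    by (simp add: complex_add_cnj)
  finally show ?thesis by (simp add: algebra_simps)
qed

lemma poly_conj_pair_poly: "poly (conj_pair_poly w) t = (t - Re w)\<^sup>2 + (Im w)\<^sup>2"
proof -
  have "(cmod w)\<^sup>2 = (Re w)\<^sup>2 + (Im w)\<^sup>2" by (simp add: cmod_power2)
  then show ?thesis by (simp add: conj_pair_poly_def) (simp add: algebra_simps power2_eq_square)
qed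

lemma rpoly_conj_pair_poly:
  "rpoly (conj_pair_poly w) (x::'k::real_normed_field)
    = of_real ((cmod w)\<^sup>2) - of_real (2 * Re w) * x + x * x"
  by (simp add: rpoly_def conj_pair_poly_def map_poly_pCons algebra_simps)

lemma rpoly_conj_pair_poly_square:
  "rpoly (conj_pair_poly w) (x::'k::real_normed_field) = (x - of_real (Re w))\<^sup>2 + of_real ((Im w)\<^sup>2)"
proof -
  have "(cmod w)\<^sup>2 = (Re w)\<^sup>2 + (Im w)\<^sup>2" by (simp add: cmod_power2)
  then have "rpoly (conj_pair_poly w) x = of_real ((Re w)\<^sup>2 + (Im w)\<^sup>2) - of_real (2 * Re w) * x + x * x"
    by (simp only: rpoly_conj_pair_poly)
  then show ?thesis by (simp add: power2_eq_square algebra_simps)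
qed

lemma norm_rpoly_conj_pair_poly_ge:
  "(cmod w)\<^sup>2 - 2 * cmod w * norm x - (norm x)\<^sup>2
    \<le> norm (rpoly (conj_pair_poly w) (x::'k::real_normed_field))"
proof -
  define u where "u = x * x - of_real (2 * Re w) * x"
  have "norm u \<le> 2 * cmod w * norm x + (norm x)\<^sup>2"
    using norm_triangle_ineq4[of "x * x" "of_real (2 * Re w) * x"] abs_Re_le_cmod[of w]
      mult_right_mono[of "\<bar>Re w\<bar>" "cmod w" "norm x"]
    by (simp add: u_def norm_mult power2_eq_square)
  moreover have "norm (of_real ((cmod w)\<^sup>2) :: 'k) - norm u \<le> norm (rpoly (conj_pair_poly w) x)"
    using norm_diff_ineq[of "of_real ((cmod w)\<^sup>2) :: 'k" u]
    by (simp add: rpoly_conj_pair_poly u_def algebra_simps del: of_real_power)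
  moreover have "norm (of_real ((cmod w)\<^sup>2) :: 'k) = (cmod w)\<^sup>2"
    by (simp only: norm_of_real) simp
  ultimately show ?thesis by linarith
qed

lemma conj_pair_poly_dvd:
  assumes "Im z \<noteq> 0" and "poly (map_poly complex_of_real Q) z = 0"
  shows "Q = conj_pair_poly z * (Q div conj_pair_poly z)"
proof -
  define r where "r = Q mod conj_pair_poly z"
  have Q: "Q = conj_pair_poly z * (Q div conj_pair_poly z) + r"
    by (simp add: r_def div_mult_mod_eq)
  have "r = 0 \<or> degree r < 2"
    using degree_mod_less[OF conj_pair_poly_nonzero, of Q z] by (simp add: r_def degree_conj_pair_poly)
  then have r: "r = [:coeff r 0, coeff r 1:]"
    by (intro poly_eqI) (auto simp: coeff_pCons coeff_eq_0 split: nat.splits)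
  have "poly (map_poly complex_of_real r) z = 0"
    using assms(2) by (subst (asm) Q)
      (simp add: map_poly_of_real_add map_poly_of_real_mult poly_conj_pair_poly_complex)
  then have "complex_of_real (coeff r 0) + z * complex_of_real (coeff r 1) = 0"
    by (subst (asm) r) (simp add: map_poly_pCons)
  then have "coeff r 1 = 0" "coeff r 0 = 0"
    using assms(1) by (auto simp: complex_eq_iff)
  with r Q show ?thesis by simp
qed

lemma real_poly_conj_pair_factor:
  assumes "degree Q \<noteq> 0" and "\<And>t. poly Q t \<noteq> 0"
  obtains z q where "Q = conj_pair_poly z * q"
proof -
  have "\<not> constant (poly (map_poly complex_of_real Q))"
    using assms(1) by (simp add: constant_degree degree_map_poly)
  then obtain z where z: "poly (map_poly complex_of_real Q) z = 0"
    using fundamental_theorem_of_algebra by blast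
  have "Im z \<noteq> 0"
  proof
    assume "Im z = 0"
    then have "z = complex_of_real (Re z)" by (simp add: complex_eq_iff)
    with z assms(2) show False by (metis poly_map_poly_complex_of_real of_real_eq_0_iff)
  qed
  with z show thesis using conj_pair_poly_dvd that by blast
qed

lemma norm_rpoly_monic_ge:
  fixes x :: "'k::real_normed_field"
  assumes min: "\<And>w. \<mu> \<le> norm (rpoly (conj_pair_poly w) x)" and "0 \<le> \<mu>"
  shows "lead_coeff Q = 1 \<Longrightarrow> (\<And>t. poly Q t \<noteq> 0) \<Longrightarrow> \<mu> ^ (degree Q div 2) \<le> norm (rpoly Q x)"
proof (induction "degree Q" arbitrary: Q rule: less_induct)
  case less
  show ?case
  proof (cases "degree Q = 0")
    case True
    with less.prems(1) have "Q = [:1:]" by (metis degree_0_id)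
    then show ?thesis by (simp add: rpoly_const True)
  next
    case False
    then obtain z q where Q: "Q = conj_pair_poly z * q"
      using real_poly_conj_pair_factor less.prems(2) by metis
    with less.prems have "q \<noteq> 0" "lead_coeff q = 1" "\<And>t. poly q t \<noteq> 0"
      by (auto simp: lead_coeff_mult lead_coeff_conj_pair_poly)
    moreover from \<open>q \<noteq> 0\<close> have deg: "degree Q = 2 + degree q"
      by (simp add: Q degree_mult_eq conj_pair_poly_nonzero degree_conj_pair_poly)
    ultimately have "\<mu> ^ (degree q div 2) \<le> norm (rpoly q x)"
      using less.hyps by simp
    then have "\<mu> * \<mu> ^ (degree q div 2) \<le> norm (rpoly (conj_pair_poly z) x) * norm (rpoly q x)"
      using min[of z] \<open>0 \<le> \<mu>\<close> by (intro mult_mono) auto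
    then show ?thesis by (simp add: deg, simp add: Q rpoly_mult norm_mult)
  qed
qed

lemma conj_pair_poly_minimum_shift:
  fixes x :: "'k::real_normed_field"
  assumes min: "\<And>w. \<mu> \<le> norm (rpoly (conj_pair_poly w) x)"
    and z: "norm (rpoly (conj_pair_poly z) x) = \<mu>" and "0 < \<epsilon>" "\<epsilon> < \<mu>"
  defines "\<zeta> \<equiv> Complex (Re z) (sqrt ((Im z)\<^sup>2 + \<epsilon>))"
  shows "norm (rpoly (conj_pair_poly \<zeta>) x) = \<mu>"
proof -
  have "(Im z)\<^sup>2 + \<epsilon> > 0" using \<open>0 < \<epsilon>\<close> by (simp add: add_nonneg_pos)
  then have "Im \<zeta> \<noteq> 0" and "(\<zeta> - z) * (\<zeta> - cnj z) = - complex_of_real \<epsilon>"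
    by (simp_all add: \<zeta>_def complex_eq_iff power2_eq_square algebra_simps)
  \<comment> \<open>For odd \<open>n\<close>, \<open>\<zeta>\<close> is a root of \<open>conj_pair_poly z ^ n + \<epsilon> ^ n\<close>; the cofactor of
    \<open>conj_pair_poly \<zeta>\<close> is monic without real roots, so its value at \<open>x\<close> has norm at least
    \<open>\<mu> ^ (n - 1)\<close>.\<close>
  have bound: "norm (rpoly (conj_pair_poly \<zeta>) x) \<le> \<mu> + \<epsilon> * (\<epsilon> / \<mu>) ^ (2 * N)" for N
  proof -
    define n where "n = Suc (2 * N)"
    define h where "h = conj_pair_poly z ^ n + [:\<epsilon> ^ n:]"
    have "poly (map_poly complex_of_real h) \<zeta> = rpoly (conj_pair_poly z) \<zeta> ^ n + complex_of_real (\<epsilon> ^ n)"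
      by (simp add: h_def rpoly_add rpoly_power rpoly_const flip: rpoly_def)
    also have "rpoly (conj_pair_poly z) \<zeta> = (\<zeta> - z) * (\<zeta> - cnj z)"
      by (simp add: rpoly_def poly_conj_pair_poly_complex)
    also have "((\<zeta> - z) * (\<zeta> - cnj z)) ^ n + complex_of_real (\<epsilon> ^ n) = 0"
      unfolding \<open>(\<zeta> - z) * (\<zeta> - cnj z) = - complex_of_real \<epsilon>\<close>
      using power_minus_odd[of n "complex_of_real \<epsilon>"] by (simp add: n_def)
    finally obtain Q where hQ: "h = conj_pair_poly \<zeta> * Q"
      using conj_pair_poly_dvd \<open>Im \<zeta> \<noteq> 0\<close> by blast
    have "degree (conj_pair_poly z ^ n) = 2 * n"
      by (simp add: degree_power_eq conj_pair_poly_nonzero degree_conj_pair_poly)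
    moreover have "lead_coeff (conj_pair_poly z ^ n) = 1"
      by (simp only: lead_coeff_power lead_coeff_conj_pair_poly) simp
    ultimately
    have "degree h = 2 * n" "lead_coeff h = 1"
      by (simp_all add: h_def n_def degree_add_eq_left lead_coeff_add_le)
    with hQ have "Q \<noteq> 0" by auto
    with hQ \<open>degree h = 2 * n\<close> have "degree Q = 2 * (2 * N)"
      by (simp add: degree_mult_eq conj_pair_poly_nonzero degree_conj_pair_poly n_def)
    moreover have "lead_coeff Q = 1"
      using hQ \<open>lead_coeff h = 1\<close> by (simp add: lead_coeff_mult lead_coeff_conj_pair_poly)
    moreover have "poly Q t \<noteq> 0" for t
    proof -
      have "poly h t > 0"
        using \<open>0 < \<epsilon>\<close> by (simp add: h_def poly_conj_pair_poly add_nonneg_pos)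
      then show ?thesis by (auto simp: hQ)
    qed
    ultimately have Q: "\<mu> ^ (2 * N) \<le> norm (rpoly Q x)"
      using norm_rpoly_monic_ge[OF min, of Q] assms(3,4) by simp
    have "norm (rpoly h x) \<le> \<mu> ^ n + \<epsilon> ^ n"
      using norm_triangle_ineq[of "rpoly (conj_pair_poly z) x ^ n" "of_real (\<epsilon> ^ n)"] \<open>0 < \<epsilon>\<close>
      by (simp add: h_def rpoly_add rpoly_power rpoly_const norm_power z del: of_real_power)
    moreover have "norm (rpoly (conj_pair_poly \<zeta>) x) * \<mu> ^ (2 * N) \<le> norm (rpoly h x)"
      using Q by (simp add: hQ rpoly_mult norm_mult mult_left_mono)
    ultimately have "norm (rpoly (conj_pair_poly \<zeta>) x) * \<mu> ^ (2 * N) \<le> \<mu> ^ n + \<epsilon> ^ n"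
      by linarith
    moreover have "(\<mu> ^ n + \<epsilon> ^ n) / \<mu> ^ (2 * N) = \<mu> + \<epsilon> * (\<epsilon> / \<mu>) ^ (2 * N)"
      using assms(3,4) by (simp add: n_def field_simps power_divide)
    ultimately show ?thesis
      using assms(3,4) by (simp add: pos_le_divide_eq flip: \<open>(\<mu> ^ n + \<epsilon> ^ n) / \<mu> ^ (2 * N) = _\<close>)
  qed
  have "(\<lambda>N. \<mu> + \<epsilon> * (\<epsilon> / \<mu>) ^ (2 * N)) \<longlonglongrightarrow> \<mu>"
    unfolding power_mult using assms(3,4)
    by (intro tendsto_add_const_iff[THEN iffD2, of _ 0, simplified] tendsto_mult_right_zero
        LIMSEQ_power_zero) (simp add: power_divide divide_less_eq power_strict_mono)
  then have "norm (rpoly (conj_pair_poly \<zeta>) x) \<le> \<mu>"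
    using bound by (intro LIMSEQ_le_const[of _ \<mu>]) auto
  with min[of \<zeta>] show ?thesis by simp
qed

lemma real_normed_field_conj_pair_root:
  fixes x :: "'k::real_normed_field"
  obtains w where "rpoly (conj_pair_poly w) x = 0"
proof -
  define f where "f w = norm (rpoly (conj_pair_poly w) x)" for w
  define R where "R = 3 * norm x + 1"
  have f0: "f 0 = (norm x)\<^sup>2"
    by (simp add: f_def rpoly_conj_pair_poly norm_mult power2_eq_square)
  have far: "f 0 < f w" if "R < cmod w" for w
  proof -
    have "3 * norm x + 1 < cmod w" "0 \<le> norm x"
      using that by (simp_all add: R_def)
    then have "(3 * norm x + 1) * (norm x + 1) < cmod w * (cmod w - 2 * norm x)"
      by (intro mult_strict_mono) linarith+
    moreover have "(3 * norm x + 1) * (norm x + 1) = 3 * (norm x)\<^sup>2 + 4 * norm x + 1"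
      "cmod w * (cmod w - 2 * norm x) = (cmod w)\<^sup>2 - 2 * cmod w * norm x"
      by (simp_all add: power2_eq_square algebra_simps)
    ultimately have "(norm x)\<^sup>2 < (cmod w)\<^sup>2 - 2 * cmod w * norm x - (norm x)\<^sup>2"
      using \<open>0 \<le> norm x\<close> zero_le_power2[of "norm x"] by linarith
    with norm_rpoly_conj_pair_poly_ge[of w x] show ?thesis
      unfolding f0 by (simp add: f_def)
  qed
  have "0 \<le> R" by (simp add: R_def add_nonneg_nonneg)
  then have "cball 0 R \<noteq> {}" by simp
  moreover have "continuous_on (cball 0 R) f"
    unfolding f_def rpoly_conj_pair_poly by (intro continuous_intros)
  ultimately obtain w0 where w0: "w0 \<in> cball 0 R" "\<And>w. w \<in> cball 0 R \<Longrightarrow> f w0 \<le> f w"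
    using continuous_attains_inf[of "cball 0 R" f] by auto
  have min: "f w0 \<le> f w" for w
    using w0(2)[of w] w0(2)[of 0] far[of w] \<open>0 \<le> R\<close> by (cases "cmod w \<le> R") auto
  show thesis
  proof (cases "f w0 = 0")
    case True
    then show thesis using that by (simp add: f_def)
  next
    case False
    \<comment> \<open>Shifting a minimiser keeps the minimum \<open>\<mu> > 0\<close>; iterating the shift reaches points
      beyond \<open>R\<close>, where \<open>f\<close> exceeds \<open>f 0 \<ge> \<mu>\<close>.\<close>
    define \<mu> where "\<mu> = f w0"
    define \<epsilon> where "\<epsilon> = \<mu> / 2"
    have "0 < \<epsilon>" "\<epsilon> < \<mu>"
      using False by (simp_all add: \<epsilon>_def \<mu>_def f_def)
    define shift where "shift z = Complex (Re z) (sqrt ((Im z)\<^sup>2 + \<epsilon>))" for z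
    have iter: "f ((shift ^^ k) w0) = \<mu> \<and> k * \<epsilon> \<le> (cmod ((shift ^^ k) w0))\<^sup>2" for k
    proof (induction k)
      case (Suc k)
      define z where "z = (shift ^^ k) w0"
      have "f z = \<mu>" using Suc by (simp add: z_def)
      then have "f (shift z) = \<mu>"
        using conj_pair_poly_minimum_shift[of \<mu> x z \<epsilon>] min \<open>0 < \<epsilon>\<close> \<open>\<epsilon> < \<mu>\<close>
        unfolding f_def \<mu>_def shift_def by simp
      moreover have "(cmod (shift z))\<^sup>2 = (cmod z)\<^sup>2 + \<epsilon>"
        using \<open>0 < \<epsilon>\<close> by (simp add: shift_def cmod_power2)
      ultimately show ?case
        using Suc by (simp add: z_def algebra_simps)
    qed (simp add: \<mu>_def)
    obtain k :: nat where "R\<^sup>2 / \<epsilon> < k"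
      using reals_Archimedean2 by blast
    then have "R\<^sup>2 < (cmod ((shift ^^ k) w0))\<^sup>2"
      using iter[of k] \<open>0 < \<epsilon>\<close> by (simp add: pos_divide_less_eq)
    then have "R < cmod ((shift ^^ k) w0)"
      by (rule power2_less_imp_less) simp
    with far iter[of k] min[of 0] have False by (force simp: \<mu>_def)
    then show thesis ..
  qed
qed

lemma conj_pair_root_bound:
  assumes "rpoly (conj_pair_poly w) (x::'k::real_normed_field) = 0"
  shows "cmod w \<le> 3 * norm x"
proof (rule ccontr)
  assume "\<not> ?thesis"
  then have "0 < (cmod w - 3 * norm x) * (cmod w + norm x)"
    using norm_ge_zero[of x] by (intro mult_pos_pos) linarith+
  then have "0 < (cmod w)\<^sup>2 - 2 * cmod w * norm x - (norm x)\<^sup>2 - 2 * (norm x)\<^sup>2"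
    by (simp add: power2_eq_square algebra_simps)
  then have "0 < (cmod w)\<^sup>2 - 2 * cmod w * norm x - (norm x)\<^sup>2"
    using zero_le_power2[of "norm x"] by linarith
  with norm_rpoly_conj_pair_poly_ge[of w x] assms show False by simp
qed

lemma compact_cball_real_normed_field: "compact (cball (0::'k::real_normed_field) r)"
proof -
  \<comment> \<open>Every element is \<open>Re w + Im w * j\<close> with \<open>j\<close> a square root of \<open>-1\<close> (if there is none, the
    field is \<open>\<real>\<close>), so the ball is a continuous image of a disc.\<close>
  obtain j :: 'k where j: "\<And>y. y * y = -1 \<Longrightarrow> y = j \<or> y = -j"
  proof (cases "\<exists>j::'k. j * j = -1")
    case True
    then obtain j :: 'k where "j * j = -1" by blast
    then have "y = j \<or> y = -j" if "y * y = -1" for y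
      using that by (metis (no_types) minus_equation_iff square_eq_iff)
    then show thesis using that by blast
  qed auto
  define L where "L z = of_real (Re z) + of_real (Im z) * j" for z
  have "cball 0 r \<subseteq> L ` cball 0 (3 * r)"
  proof
    fix x :: 'k assume x: "x \<in> cball 0 r"
    obtain w where w: "rpoly (conj_pair_poly w) x = 0"
      using real_normed_field_conj_pair_root by blast
    then have "cmod w \<le> 3 * r"
      using conj_pair_root_bound[OF w] x by simp
    moreover have "x = L w \<or> x = L (cnj w)"
    proof (cases "Im w = 0")
      case True
      then show ?thesis using w by (simp add: rpoly_conj_pair_poly_square L_def)
    next
      case False
      define y where "y = (x - of_real (Re w)) / of_real (Im w)"
      have "y * y = -1"
        using w False by (simp add: rpoly_conj_pair_poly_square y_def power2_eq_square field_simps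
            add_eq_0_iff2 del: of_real_power)
      then have "y = j \<or> y = -j" by (rule j)
      moreover have "x = of_real (Re w) + of_real (Im w) * y"
        using False by (simp add: y_def)
      ultimately show ?thesis by (auto simp: L_def)
    qed
    ultimately show "x \<in> L ` cball 0 (3 * r)"
      by (metis complex_mod_cnj image_eqI mem_cball_0)
  qed
  moreover have "compact (L ` cball 0 (3 * r))"
    unfolding L_def by (intro compact_continuous_image continuous_intros compact_cball)
  ultimately have "compact (L ` cball 0 (3 * r) \<inter> cball 0 r)"
    by (intro compact_Int_closed) auto
  moreover have "L ` cball 0 (3 * r) \<inter> cball 0 r = cball 0 r"
    using \<open>cball 0 r \<subseteq> _\<close> by blast
  ultimately show ?thesis by simp
qed

section \<open>Topologies generated by families of seminorms\<close>

lemma generate_topology_on_nbhd: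
  "generate_topology_on B U \<Longrightarrow> \<forall>x\<in>U. \<exists>F. finite F \<and> F \<subseteq> B \<and> x \<in> \<Inter>F \<and> \<Inter>F \<subseteq> U"
proof (induction rule: generate_topology_on.induct)
  case Empty then show ?case by simp
next
  case (Int a b)
  show ?case
  proof
    fix x assume x: "x \<in> a \<inter> b"
    obtain F1 where F1: "finite F1" "F1 \<subseteq> B" "x \<in> \<Inter>F1" "\<Inter>F1 \<subseteq> a"
      using Int.IH(1) x by (meson IntD1)
    obtain F2 where F2: "finite F2" "F2 \<subseteq> B" "x \<in> \<Inter>F2" "\<Inter>F2 \<subseteq> b"
      using Int.IH(2) x by (meson IntD2)
    have "\<Inter>(F1 \<union> F2) \<subseteq> a \<inter> b" using F1(4) F2(4) by auto
    then show "\<exists>F. finite F \<and> F \<subseteq> B \<and> x \<in> \<Inter>F \<and> \<Inter>F \<subseteq> a \<inter> b"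
      using F1 F2 by (intro exI[of _ "F1 \<union> F2"]) blast
  qed
next
  case (UN K)
  show ?case
  proof
    fix x assume "x \<in> \<Union>K"
    then obtain k where k: "k \<in> K" "x \<in> k" by blast
    obtain F where F: "finite F" "F \<subseteq> B" "x \<in> \<Inter>F" "\<Inter>F \<subseteq> k" using UN.IH k by meson
    have "\<Inter>F \<subseteq> \<Union>K" using F(4) k by blast
    then show "\<exists>F. finite F \<and> F \<subseteq> B \<and> x \<in> \<Inter>F \<and> \<Inter>F \<subseteq> \<Union>K" using F by blast
  qed
next
  case (Basis s)
  then show ?case by (intro ballI exI[of _ "{s}"]) simp
qed

lemma continuous_map_topology_generated_by:
  assumes "\<And>x. x \<in> topspace X \<Longrightarrow> f x \<in> \<Union>B"
    and "\<And>b. b \<in> B \<Longrightarrow> openin X {x \<in> topspace X. f x \<in> b}"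
  shows "continuous_map X (topology_generated_by B) f"
proof -
  have "generate_topology_on B U \<Longrightarrow> openin X {x \<in> topspace X. f x \<in> U}" for U
  proof (induction rule: generate_topology_on.induct)
    case Empty then show ?case by simp
  next
    case (Int a b)
    have "{x \<in> topspace X. f x \<in> a \<inter> b} = {x \<in> topspace X. f x \<in> a} \<inter> {x \<in> topspace X. f x \<in> b}" by auto
    then show ?case using Int by auto
  next
    case (UN K)
    have "{x \<in> topspace X. f x \<in> \<Union>K} = (\<Union>k\<in>K. {x \<in> topspace X. f x \<in> k})" by auto
    then show ?case using UN by auto
  next
    case (Basis s) then show ?case by (rule assms(2))
  qed
  then show ?thesis unfolding continuous_map_def openin_topology_generated_by_iff
    using assms(1) by auto
qed

lemma sn_directed_finite_Inter_nbhd: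
  fixes q :: "'i \<Rightarrow> 'v::ab_group_add \<Rightarrow> real"
  assumes "sn_directed S q" and "g \<in> S" and diff: "\<And>a b. a \<in> S \<Longrightarrow> b \<in> S \<Longrightarrow> a - b \<in> S"
  shows "finite F \<Longrightarrow> (\<And>b. b \<in> F \<Longrightarrow> \<exists>i \<delta>. \<delta> > 0 \<and> (\<forall>y\<in>S. q i (y - g) < \<delta> \<longrightarrow> y \<in> b))
    \<Longrightarrow> \<exists>i \<delta>. \<delta> > 0 \<and> (\<forall>y\<in>S. q i (y - g) < \<delta> \<longrightarrow> y \<in> \<Inter>F)"
proof (induction F rule: finite_induct)
  case empty
  show ?case by (intro exI[of _ undefined] exI[of _ 1]) simp
next
  case (insert b F)
  obtain i1 \<delta>1 where 1: "\<delta>1 > 0" "\<forall>y\<in>S. q i1 (y - g) < \<delta>1 \<longrightarrow> y \<in> b"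
    using insert.prems by blast
  obtain i2 \<delta>2 where 2: "\<delta>2 > 0" "\<forall>y\<in>S. q i2 (y - g) < \<delta>2 \<longrightarrow> y \<in> \<Inter>F"
    using insert.IH insert.prems by blast
  obtain i3 C where C: "C > 0" "\<forall>f\<in>S. max (q i1 f) (q i2 f) \<le> C * q i3 f"
    using assms(1) unfolding sn_directed_def by blast
  have "y \<in> \<Inter>(insert b F)" if "y \<in> S" "q i3 (y - g) < min \<delta>1 \<delta>2 / C" for y
  proof -
    have "C * q i3 (y - g) < min \<delta>1 \<delta>2"
      using that(2) C(1) by (simp add: pos_less_divide_eq mult.commute)
    moreover have "max (q i1 (y - g)) (q i2 (y - g)) \<le> C * q i3 (y - g)"
      using C(2) diff[OF that(1) assms(2)] by blast
    ultimately have "q i1 (y - g) < \<delta>1" "q i2 (y - g) < \<delta>2" by linarith+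
    then show ?thesis using 1(2) 2(2) that(1) by blast
  qed
  moreover have "min \<delta>1 \<delta>2 / C > 0" using 1(1) 2(1) C(1) by simp
  ultimately show ?case by blast
qed

lemma openin_sn_top_nbhd:
  fixes q :: "'i \<Rightarrow> 'v::ab_group_add \<Rightarrow> real"
  assumes diff: "\<And>a b. a \<in> S \<Longrightarrow> b \<in> S \<Longrightarrow> a - b \<in> S"
    and add_le: "\<And>i a b. a \<in> S \<Longrightarrow> b \<in> S \<Longrightarrow> q i (a + b) \<le> q i a + q i b"
    and "sn_directed S q" and "openin (sn_top S q) U" and "g \<in> U"
  shows "\<exists>i \<delta>. \<delta> > 0 \<and> (\<forall>y\<in>S. q i (y - g) < \<delta> \<longrightarrow> y \<in> U)"
proof -
  define \<B> where "\<B> = {{y. q i (y - x) < e} | i x e. x \<in> S \<and> e > 0}"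
  have "openin (subtopology (topology_generated_by \<B>) S) U"
    using assms(4) by (simp add: sn_top_def \<B>_def)
  then obtain T where T: "generate_topology_on \<B> T" "U = T \<inter> S"
    by (auto simp: openin_subtopology openin_topology_generated_by_iff)
  with assms(5) have "g \<in> S" "g \<in> T" by auto
  then obtain F where F: "finite F" "F \<subseteq> \<B>" "g \<in> \<Inter>F" "\<Inter>F \<subseteq> T"
    using generate_topology_on_nbhd[OF T(1)] by meson
  have F_nbhd: "\<exists>i \<delta>. \<delta> > 0 \<and> (\<forall>y\<in>S. q i (y - g) < \<delta> \<longrightarrow> y \<in> b)" if "b \<in> F" for b
  proof -
    obtain i x e where b: "b = {y. q i (y - x) < e}" "x \<in> S"
      using \<open>b \<in> F\<close> F(2) by (auto simp: \<B>_def)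
    have "y \<in> b" if "y \<in> S" "q i (y - g) < e - q i (g - x)" for y
    proof -
      have "q i (y - x) \<le> q i (y - g) + q i (g - x)"
        using add_le[of "y - g" "g - x" i] diff that(1) \<open>g \<in> S\<close> b(2) by simp
      with that(2) show ?thesis by (simp add: b(1))
    qed
    moreover have "q i (g - x) < e" using F(3) \<open>b \<in> F\<close> b(1) by auto
    ultimately show ?thesis
      by (intro exI[of _ i] exI[of _ "e - q i (g - x)"]) auto
  qed
  obtain i \<delta> where "\<delta> > 0" and \<delta>: "\<forall>y\<in>S. q i (y - g) < \<delta> \<longrightarrow> y \<in> \<Inter>F"
    using sn_directed_finite_Inter_nbhd[OF assms(3) \<open>g \<in> S\<close> diff F(1) F_nbhd] by blast
  moreover have "y \<in> U" if "y \<in> S" "q i (y - g) < \<delta>" for y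
    using \<delta> F(4) T(2) that by blast
  ultimately show ?thesis by blast
qed

lemma openin_sn_top_ball:
  fixes q :: "'i \<Rightarrow> 'v::ab_group_add \<Rightarrow> real"
  assumes "x \<in> S" "e > 0"
  shows "openin (sn_top S q) {y \<in> S. q i (y - x) < e}"
proof -
  have "openin (topology_generated_by {{y. q i (y - x) < e} | i x e. x \<in> S \<and> e > 0}) {y. q i (y - x) < e}"
    using assms by (intro topology_generated_by_Basis) blast
  then show ?thesis unfolding sn_top_def openin_subtopology by blast
qed

lemma topspace_sn_top:
  fixes q :: "'i \<Rightarrow> 'v::ab_group_add \<Rightarrow> real"
  assumes "\<And>i. q i 0 = 0"
  shows "topspace (sn_top S q) = S"
proof -
  have "S \<subseteq> \<Union>{{y. q i (y - x) < e} | i x e. x \<in> S \<and> e > 0}"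
  proof
    fix x assume "x \<in> S"
    then have "{y. q undefined (y - x) < 1} \<in> {{y. q i (y - x) < e} | i x e. x \<in> S \<and> e > 0}"
      unfolding mem_Collect_eq by (intro exI[of _ undefined] exI[of _ x] exI[of _ "1::real"]) simp
    moreover have "x \<in> {y. q undefined (y - x) < 1}" using assms by simp
    ultimately show "x \<in> \<Union>{{y. q i (y - x) < e} | i x e. x \<in> S \<and> e > 0}" by blast
  qed
  then show ?thesis unfolding sn_top_def by auto
qed

lemma Hausdorff_space_sn_top:
  fixes q :: "'i \<Rightarrow> 'v::ab_group_add \<Rightarrow> real"
  assumes diff: "\<And>a b. a \<in> S \<Longrightarrow> b \<in> S \<Longrightarrow> a - b \<in> S"
    and add_le: "\<And>i a b. a \<in> S \<Longrightarrow> b \<in> S \<Longrightarrow> q i (a + b) \<le> q i a + q i b"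
    and minus: "\<And>i a. a \<in> S \<Longrightarrow> q i (- a) = q i a"
    and nonneg: "\<And>i a. a \<in> S \<Longrightarrow> q i a \<ge> 0"
    and zero: "\<And>i. q i 0 = 0"
    and "sn_hausdorff S q"
  shows "Hausdorff_space (sn_top S q)"
  unfolding Hausdorff_space_def topspace_sn_top[of q, OF zero]
proof (intro allI impI, elim conjE)
  fix g h assume "g \<in> S" "h \<in> S" "g \<noteq> h"
  then obtain i where "q i (g - h) \<noteq> 0"
    using assms(6) diff[OF \<open>g \<in> S\<close> \<open>h \<in> S\<close>] unfolding sn_hausdorff_def by auto
  then have d: "q i (g - h) > 0"
    using nonneg[OF diff[OF \<open>g \<in> S\<close> \<open>h \<in> S\<close>], of i] by linarith
  define U where "U = {y \<in> S. q i (y - g) < q i (g - h) / 2}"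
  define V where "V = {y \<in> S. q i (y - h) < q i (g - h) / 2}"
  have "disjnt U V"
    unfolding disjnt_def
  proof (rule equals0I)
    fix y assume "y \<in> U \<inter> V"
    then have "y \<in> S" "q i (y - g) < q i (g - h) / 2" "q i (y - h) < q i (g - h) / 2"
      by (auto simp: U_def V_def)
    moreover have "q i (g - h) \<le> q i (y - g) + q i (y - h)"
      using add_le[of "- (y - g)" "y - h" i] minus[of "y - g" i] diff \<open>y \<in> S\<close> \<open>g \<in> S\<close> \<open>h \<in> S\<close>
      by (simp add: diff_add_eq)
    ultimately show False by linarith
  qed
  moreover have "openin (sn_top S q) U" "openin (sn_top S q) V"
    unfolding U_def V_def using d \<open>g \<in> S\<close> \<open>h \<in> S\<close> by (simp_all only: openin_sn_top_ball half_gt_zero)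
  moreover have "g \<in> U" "h \<in> V"
    using d \<open>g \<in> S\<close> \<open>h \<in> S\<close> zero by (simp_all add: U_def V_def)
  ultimately show "\<exists>U V. openin (sn_top S q) U \<and> openin (sn_top S q) V \<and> g \<in> U \<and> h \<in> V \<and> disjnt U V"
    by blast
qed

section \<open>Seminorms, the dual space and polars\<close>

context
  fixes sc :: "'k::real_normed_field \<Rightarrow> 'e::ab_group_add \<Rightarrow> 'e" and q :: "'e \<Rightarrow> real"
  assumes vector_space: "vector_space sc" and seminorm: "is_seminorm sc q"
begin

lemma seminorm_add_le: "q (x + y) \<le> q x + q y"
  and seminorm_scale: "q (sc c x) = norm c * q x"
  using seminorm unfolding is_seminorm_def by blast+

lemma seminorm_zero: "q 0 = 0"
  using seminorm_scale[of 0 0] vector_space module.scale_zero_left[of sc]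
  by (simp add: module_iff_vector_space)

lemma seminorm_minus: "q (- x) = q x"
  using seminorm_scale[of "-1" x] vector_space module.scale_minus_left[of sc] module.scale_one[of sc]
  by (simp add: module_iff_vector_space)

lemma seminorm_nonneg: "0 \<le> q x"
  using seminorm_add_le[of x "- x"] seminorm_minus[of x] seminorm_zero by simp

lemma seminorm_diff_commute: "q (x - y) = q (y - x)"
  using seminorm_minus[of "x - y"] by simp

lemma seminorm_scale_of_real: "0 \<le> t \<Longrightarrow> q (sc (of_real t) x) = t * q x"
  using seminorm_scale[of "of_real t" x] by simp

lemma norm_le_seminorm_if_ball_bound:
  assumes hom: "\<And>c x. e (sc c x) = c * e x" and "\<delta> > 0"
    and ball: "\<And>y. q y < \<delta> \<Longrightarrow> norm (e y) \<le> 1"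
  shows "norm (e x) * \<delta> \<le> q x"
proof (rule field_le_epsilon)
  fix \<epsilon> :: real assume "\<epsilon> > 0"
  define t where "t = q x + \<epsilon>"
  have "t > 0" using seminorm_nonneg[of x] \<open>\<epsilon> > 0\<close> by (simp add: t_def)
  have "q (sc (of_real (\<delta> / t)) x) = \<delta> / t * q x"
    using \<open>\<delta> > 0\<close> \<open>t > 0\<close> by (intro seminorm_scale_of_real) simp
  also have "\<dots> < \<delta>"
    using \<open>\<delta> > 0\<close> \<open>t > 0\<close> \<open>\<epsilon> > 0\<close> by (simp add: t_def field_simps)
  finally have "norm (e (sc (of_real (\<delta> / t)) x)) \<le> 1"
    by (rule ball)
  then have "\<delta> / t * norm (e x) \<le> 1"
    using \<open>\<delta> > 0\<close> \<open>t > 0\<close> by (simp only: hom norm_mult norm_of_real) simp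
  then show "norm (e x) * \<delta> \<le> q x + \<epsilon>"
    using \<open>t > 0\<close> by (simp add: t_def field_simps)
qed

end

lemma linear_iff_additive_homogeneous:
  fixes e :: "'e::ab_group_add \<Rightarrow> 'k::field"
  assumes "vector_space sc"
  shows "Vector_Spaces.linear sc (*) e \<longleftrightarrow> (\<forall>x y. e (x + y) = e x + e y) \<and> (\<forall>c x. e (sc c x) = c * e x)"
proof -
  have "vector_space ((*) :: 'k \<Rightarrow> 'k \<Rightarrow> 'k)"
    by unfold_locales (simp_all add: algebra_simps)
  with assms show ?thesis by (simp add: Vector_Spaces.linear_iff)
qed

definition seminorm_totally_bounded :: "('e::ab_group_add \<Rightarrow> real) \<Rightarrow> 'e set \<Rightarrow> bool" where
  "seminorm_totally_bounded q A \<longleftrightarrow> (\<forall>\<eta>>0. \<exists>F. finite F \<and> (\<forall>v\<in>A. \<exists>y\<in>F. q (v - y) \<le> \<eta>))"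

lemma tvs_bounded_sn_top:
  fixes q :: "'i \<Rightarrow> 'v::ab_group_add \<Rightarrow> real" and sc :: "'k::real_normed_field \<Rightarrow> 'v \<Rightarrow> 'v"
  assumes nbhd: "\<And>U. openin (sn_top S q) U \<Longrightarrow> 0 \<in> U \<Longrightarrow> \<exists>i \<delta>. \<delta> > 0 \<and> (\<forall>y\<in>S. q i (y - 0) < \<delta> \<longrightarrow> y \<in> U)"
    and "B \<subseteq> S"
    and scale_closed: "\<And>c f. f \<in> S \<Longrightarrow> sc c f \<in> S"
    and scale_le: "\<And>i c f. f \<in> S \<Longrightarrow> q i (sc c f) \<le> norm c * q i f"
    and scale_inverse: "\<And>c f. c \<noteq> 0 \<Longrightarrow> sc c (sc (inverse c) f) = f"
    and bdd: "\<And>i. bdd_above (q i ` B)"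
  shows "tvs_bounded sc (sn_top S q) B"
  unfolding tvs_bounded_def
proof (intro allI impI, elim conjE)
  fix U assume "openin (sn_top S q) U" "0 \<in> U"
  then have "\<exists>i \<delta>. \<delta> > 0 \<and> (\<forall>y\<in>S. q i (y - 0) < \<delta> \<longrightarrow> y \<in> U)"
    by (rule nbhd)
  then obtain i \<delta> where "\<delta> > 0" and U: "\<forall>y\<in>S. q i y < \<delta> \<longrightarrow> y \<in> U"
    by auto
  obtain M where M: "\<And>f. f \<in> B \<Longrightarrow> q i f \<le> M"
    using bdd[of i] by (auto simp: bdd_above_def)
  define r where "r = (\<bar>M\<bar> + 1) / \<delta>"
  have "B \<subseteq> sc c ` U" if "r \<le> norm c" for c
  proof
    fix f assume "f \<in> B"
    have "0 < r" using \<open>\<delta> > 0\<close> by (simp add: r_def)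
    with that have "c \<noteq> 0" by auto
    have "f \<in> S" using \<open>f \<in> B\<close> \<open>B \<subseteq> S\<close> by blast
    have "q i (sc (inverse c) f) \<le> norm (inverse c) * q i f"
      by (rule scale_le[OF \<open>f \<in> S\<close>])
    also have "\<dots> \<le> norm (inverse c) * \<bar>M\<bar>"
      using M[OF \<open>f \<in> B\<close>] by (intro mult_left_mono) auto
    also have "\<dots> = \<bar>M\<bar> / norm c"
      by (simp add: norm_inverse divide_inverse mult.commute)
    also have "\<dots> \<le> \<bar>M\<bar> / r"
      using that \<open>0 < r\<close> by (intro divide_left_mono) (auto intro!: mult_pos_pos)
    also have "\<dots> < \<delta>"
      using \<open>\<delta> > 0\<close> by (simp add: r_def field_simps)
    finally have "sc (inverse c) f \<in> U"
      using U scale_closed[OF \<open>f \<in> S\<close>] by blast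
    then show "f \<in> sc c ` U"
      using scale_inverse[OF \<open>c \<noteq> 0\<close>, of f] by (simp add: rev_image_eqI)
  qed
  moreover have "r > 0" using \<open>\<delta> > 0\<close> by (simp add: r_def)
  ultimately show "\<exists>r>0. \<forall>c. r \<le> norm c \<longrightarrow> B \<subseteq> sc c ` U" by blast
qed

lemma seminorm_totally_bounded_subset:
  "seminorm_totally_bounded q A \<Longrightarrow> B \<subseteq> A \<Longrightarrow> seminorm_totally_bounded q B"
  unfolding seminorm_totally_bounded_def by (meson subsetD)

lemma seminorm_totally_bounded_if_small_outside:
  assumes "\<And>\<eta>. \<eta> > 0 \<Longrightarrow> \<exists>A'. seminorm_totally_bounded q A' \<and> (\<forall>v\<in>A. v \<in> A' \<or> q v \<le> \<eta>)"
  shows "seminorm_totally_bounded q A"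
  unfolding seminorm_totally_bounded_def
proof (intro allI impI)
  fix \<eta> :: real assume "\<eta> > 0"
  then obtain A' where "seminorm_totally_bounded q A'" and A': "\<forall>v\<in>A. v \<in> A' \<or> q v \<le> \<eta>"
    using assms by blast
  then obtain F where "finite F" and F: "\<forall>v\<in>A'. \<exists>y\<in>F. q (v - y) \<le> \<eta>"
    using \<open>\<eta> > 0\<close> unfolding seminorm_totally_bounded_def by blast
  have "\<exists>y\<in>insert 0 F. q (v - y) \<le> \<eta>" if "v \<in> A" for v
    using A' F that by fastforce
  with \<open>finite F\<close> show "\<exists>F. finite F \<and> (\<forall>v\<in>A. \<exists>y\<in>F. q (v - y) \<le> \<eta>)"
    by (intro exI[of _ "insert 0 F"]) simp
qed

locale seminormed_space =
  fixes sc :: "'k::real_normed_field \<Rightarrow> 'e::ab_group_add \<Rightarrow> 'e" and p :: "'a \<Rightarrow> 'e \<Rightarrow> real"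
  assumes vector_space: "vector_space sc"
    and seminorms: "\<And>\<alpha>. is_seminorm sc (p \<alpha>)"
    and directed: "sn_directed UNIV p"
begin

abbreviation "Te \<equiv> sn_top UNIV p"
abbreviation "E' \<equiv> dual_space sc p"
abbreviation "polar_ball \<alpha> \<equiv> polar sc p {x. p \<alpha> x < 1}"

lemmas p_add_le = seminorm_add_le[OF vector_space seminorms]
lemmas p_scale = seminorm_scale[OF vector_space seminorms]
lemmas p_zero = seminorm_zero[OF vector_space seminorms]
lemmas p_diff_commute = seminorm_diff_commute[OF vector_space seminorms]
lemmas p_scale_of_real = seminorm_scale_of_real[OF vector_space seminorms]

lemma topspace_Te: "topspace Te = UNIV"
  by (rule topspace_sn_top) (rule p_zero)

lemma openin_Te_ball: "\<eta> > 0 \<Longrightarrow> openin Te {y. p \<alpha> (y - x) < \<eta>}"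
  using openin_sn_top_ball[of x UNIV \<eta> p \<alpha>] by simp

lemma openin_Te_ball0: "\<eta> > 0 \<Longrightarrow> openin Te {y. p \<alpha> y < \<eta>}"
  using openin_Te_ball[of \<eta> \<alpha> 0] by simp

lemma openin_Te_nbhd:
  "openin Te U \<Longrightarrow> g \<in> U \<Longrightarrow> \<exists>\<beta> \<delta>. \<delta> > 0 \<and> (\<forall>y. p \<beta> (y - g) < \<delta> \<longrightarrow> y \<in> U)"
  using openin_sn_top_nbhd[of UNIV p U g, OF _ p_add_le directed] by simp

lemma dual_space_additive: "e' \<in> E' \<Longrightarrow> e' (x + y) = e' x + e' y"
  and dual_space_homogeneous: "e' \<in> E' \<Longrightarrow> e' (sc c x) = c * e' x"
  by (simp_all add: dual_space_def linear_iff_additive_homogeneous[OF vector_space])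

lemma dual_space_diff: "e' \<in> E' \<Longrightarrow> e' (x - y) = e' x - e' y"
  using dual_space_additive[of e' "x - y" y] by (simp add: eq_diff_eq)

lemma dual_space_bound:
  assumes "e' \<in> E'"
  obtains \<beta> C where "C \<ge> 0" "\<And>x. norm (e' x) \<le> C * p \<beta> x"
proof -
  have "openin Te {x \<in> topspace Te. e' x \<in> ball 0 1}"
    using assms by (intro openin_continuous_map_preimage) (auto simp: dual_space_def)
  moreover have "0 \<in> {x \<in> topspace Te. e' x \<in> ball 0 1}"
    using dual_space_additive[OF assms, of 0 0] by (simp add: topspace_Te)
  ultimately obtain \<beta> \<delta> where "\<delta> > 0"
    and U: "\<And>y. p \<beta> (y - 0) < \<delta> \<Longrightarrow> y \<in> {x \<in> topspace Te. e' x \<in> ball 0 1}"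
    using openin_Te_nbhd by blast
  have ball: "norm (e' y) \<le> 1" if "p \<beta> y < \<delta>" for y
    using U[of y] that by simp
  have "norm (e' x) * \<delta> \<le> p \<beta> x" for x
    by (rule norm_le_seminorm_if_ball_bound[OF vector_space seminorms dual_space_homogeneous[OF assms]
          \<open>\<delta> > 0\<close> ball])
  then have "norm (e' x) \<le> 1 / \<delta> * p \<beta> x" for x
    using \<open>\<delta> > 0\<close> by (simp add: field_simps)
  moreover have "0 \<le> 1 / \<delta>" using \<open>\<delta> > 0\<close> by simp
  ultimately show thesis using that by blast
qed

lemma polar_ball_bound:
  assumes "e' \<in> polar_ball \<alpha>"
  shows "norm (e' x) \<le> p \<alpha> x"
proof -
  have "e' \<in> E'" "\<And>y. p \<alpha> y < 1 \<Longrightarrow> norm (e' y) \<le> 1"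
    using assms by (auto simp: polar_def)
  then show ?thesis
    using norm_le_seminorm_if_ball_bound[OF vector_space seminorms, of e' 1 \<alpha> x]
    by (simp add: dual_space_homogeneous)
qed

lemma continuous_map_Te_if_bounded:
  fixes e :: "'e \<Rightarrow> 'k"
  assumes add: "\<And>x y. e (x + y) = e x + e y" and bound: "\<And>x. norm (e x) \<le> p \<alpha> x"
  shows "continuous_map Te euclidean e"
  unfolding continuous_map_def
proof (intro conjI allI impI)
  fix V :: "'k set" assume "openin euclidean V"
  show "openin Te {x \<in> topspace Te. e x \<in> V}"
  proof (subst openin_subopen, intro ballI)
    fix x0 assume x0: "x0 \<in> {x \<in> topspace Te. e x \<in> V}"
    then obtain r where "r > 0" "ball (e x0) r \<subseteq> V"
      using \<open>openin euclidean V\<close> open_contains_ball_eq[of V] by force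
    have "e y \<in> V" if "p \<alpha> (y - x0) < r" for y
    proof -
      have "dist (e x0) (e y) = norm (e (y - x0))"
        using add[of "y - x0" x0] by (simp add: dist_norm norm_minus_commute)
      then have "dist (e x0) (e y) < r"
        using bound[of "y - x0"] that by linarith
      then show ?thesis using \<open>ball (e x0) r \<subseteq> V\<close> by auto
    qed
    moreover have "x0 \<in> {y. p \<alpha> (y - x0) < r}" using \<open>r > 0\<close> by (simp add: p_zero)
    ultimately show "\<exists>T. openin Te T \<and> x0 \<in> T \<and> T \<subseteq> {x \<in> topspace Te. e x \<in> V}"
      using openin_Te_ball[OF \<open>r > 0\<close>, of \<alpha> x0]
      by (intro exI[of _ "{y. p \<alpha> (y - x0) < r}"]) (auto simp: topspace_Te)
  qed
qed auto

lemma polar_ball_eq: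
  "polar_ball \<alpha> = {e. (\<forall>x y. e (x + y) = e x + e y) \<and> (\<forall>c x. e (sc c x) = c * e x) \<and> (\<forall>x. norm (e x) \<le> p \<alpha> x)}"
    (is "_ = ?Q")
proof
  show "polar_ball \<alpha> \<subseteq> ?Q"
    using polar_ball_bound by (auto simp: polar_def dual_space_additive dual_space_homogeneous)
next
  show "?Q \<subseteq> polar_ball \<alpha>"
  proof
    fix e assume "e \<in> ?Q"
    then have "e \<in> E'"
      using continuous_map_Te_if_bounded[of e \<alpha>]
      by (simp add: dual_space_def linear_iff_additive_homogeneous[OF vector_space])
    moreover have "norm (e x) \<le> 1" if "p \<alpha> x < 1" for x
      using \<open>e \<in> ?Q\<close> that by (auto intro: order_trans[of _ "p \<alpha> x"])
    ultimately show "e \<in> polar_ball \<alpha>"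
      by (simp add: polar_def)
  qed
qed

lemma compact_polar_ball: "compact (polar_ball \<alpha>)"
proof -
  define K where "K = PiE UNIV (\<lambda>x. cball (0::'k) (p \<alpha> x))"
  have "compactin (product_topology (\<lambda>_. euclidean) UNIV) K"
    unfolding K_def compactin_PiE by (simp add: compact_cball_real_normed_field)
  then have "compact K" by (simp add: euclidean_product_topology)
  moreover have "closed {e::'e \<Rightarrow> 'k. (\<forall>x y. e (x + y) = e x + e y) \<and> (\<forall>c x. e (sc c x) = c * e x)
      \<and> (\<forall>x. norm (e x) \<le> p \<alpha> x)}"
    by (intro closed_Collect_conj closed_Collect_all closed_Collect_eq closed_Collect_le
        continuous_on_add continuous_on_mult_left continuous_on_norm continuous_on_const
        continuous_on_product_coordinates)
  ultimately have "compact (K \<inter> polar_ball \<alpha>)"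
    unfolding polar_ball_eq by (rule compact_Int_closed)
  moreover have "polar_ball \<alpha> \<subseteq> K"
    using polar_ball_bound by (auto simp: K_def PiE_def extensional_def)
  ultimately show ?thesis by (simp add: Int_absorb1)
qed

lemma polar_ball_subset_dual: "polar_ball \<alpha> \<subseteq> E'"
  by (auto simp: polar_def)

lemma polar_ball_close:
  assumes "e' \<in> polar_ball \<alpha>" "e0 \<in> polar_ball \<alpha>"
    and "p \<alpha> (v - y) \<le> \<eta>" and "norm (e' y - e0 y) < \<eta>"
  shows "norm (e' v - e0 v) \<le> 3 * \<eta>"
proof -
  have "e' \<in> E'" "e0 \<in> E'" using assms(1,2) by (simp_all add: polar_def)
  then have eq: "e' v - e0 v = e' (v - y) + (e' y - e0 y) + e0 (y - v)"
    by (simp add: dual_space_diff)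
  have "norm (e' v - e0 v) \<le> norm (e' (v - y)) + norm (e' y - e0 y) + norm (e0 (y - v))"
    unfolding eq using norm_triangle_ineq[of "e' (v - y) + (e' y - e0 y)" "e0 (y - v)"]
      norm_triangle_ineq[of "e' (v - y)" "e' y - e0 y"] by linarith
  moreover have "norm (e' (v - y)) \<le> \<eta>" "norm (e0 (y - v)) \<le> \<eta>"
    using polar_ball_bound[OF assms(1), of "v - y"] polar_ball_bound[OF assms(2), of "y - v"]
      assms(3) p_diff_commute[of \<alpha> v y] by linarith+
  ultimately show ?thesis using assms(4) by linarith
qed

lemma tvs_bounded_Te:
  assumes "\<And>\<beta>. bdd_above (p \<beta> ` B)"
  shows "tvs_bounded sc Te B"
proof (rule tvs_bounded_sn_top[OF _ subset_UNIV])
  show "sc c (sc (inverse c) x) = x" if "c \<noteq> 0" for c x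
    using that vector_space module.scale_scale[of sc] module.scale_one[of sc]
    by (simp add: module_iff_vector_space)
qed (use openin_Te_nbhd[of _ 0] assms in \<open>auto simp: p_scale\<close>)

lemma totally_bounded_if_precompact_in_Te:
  assumes "precompact_in Te K"
  shows "seminorm_totally_bounded (p \<alpha>) K"
  unfolding seminorm_totally_bounded_def
proof (intro allI impI)
  fix \<eta> :: real assume "\<eta> > 0"
  then have "openin Te {y. p \<alpha> y < \<eta>}" "0 \<in> {y. p \<alpha> y < \<eta>}"
    by (simp_all add: openin_Te_ball0 p_zero)
  then obtain F where "finite F" "K \<subseteq> (\<Union>x\<in>F. (\<lambda>u. x + u) ` {y. p \<alpha> y < \<eta>})"
    using assms unfolding precompact_in_def by auto
  moreover have "\<exists>y\<in>F. p \<alpha> (v - y) \<le> \<eta>" if "v \<in> (\<Union>x\<in>F. (\<lambda>u. x + u) ` {y. p \<alpha> y < \<eta>})" for v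
  proof -
    from that obtain x u where "x \<in> F" "p \<alpha> u < \<eta>" "v = x + u" by blast
    then show ?thesis by (intro bexI[of _ x]) simp_all
  qed
  ultimately show "\<exists>F. finite F \<and> (\<forall>v\<in>K. \<exists>y\<in>F. p \<alpha> (v - y) \<le> \<eta>)" by blast
qed

lemma precompact_in_if_compactin_Te:
  assumes "compactin Te K"
  shows "precompact_in Te K"
  unfolding precompact_in_def
proof (intro allI impI, elim conjE)
  fix U assume "openin Te U" "0 \<in> U"
  then obtain \<beta> \<delta> where "\<delta> > 0" and U: "\<forall>y. p \<beta> (y - 0) < \<delta> \<longrightarrow> y \<in> U"
    using openin_Te_nbhd by blast
  define B where "B x = {y. p \<beta> (y - x) < \<delta>}" for x
  have open_B: "openin Te (B x)" and centre_B: "x \<in> B x" for x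
    using \<open>\<delta> > 0\<close> by (simp_all add: B_def openin_Te_ball p_zero)
  have "K \<subseteq> \<Union>(B ` K)" using centre_B by blast
  then obtain F where F: "finite F" "F \<subseteq> B ` K" "K \<subseteq> \<Union>F"
    using assms open_B unfolding compactin_def by (metis (no_types, lifting) imageE)
  obtain C where C: "finite C" "F = B ` C"
    using finite_subset_image[OF F(1,2)] by blast
  have "K \<subseteq> (\<Union>x\<in>C. (\<lambda>u. x + u) ` U)"
  proof
    fix y assume "y \<in> K"
    then obtain x where "x \<in> C" "y \<in> B x" using F(3) C(2) by blast
    then have "y - x \<in> U" using U by (simp add: B_def)
    then have "y \<in> (\<lambda>u. x + u) ` U" by (intro image_eqI[of _ _ "y - x"]) simp_all
    with \<open>x \<in> C\<close> show "y \<in> (\<Union>x\<in>C. (\<lambda>u. x + u) ` U)" by blast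
  qed
  with C(1) show "\<exists>F. finite F \<and> K \<subseteq> (\<Union>x\<in>F. (\<lambda>u. x + u) ` U)" by blast
qed

lemma totally_bounded_if_semi_montel:
  assumes "semi_montel sc UNIV Te" and "tvs_bounded sc Te B"
  shows "seminorm_totally_bounded (p \<alpha>) B"
proof -
  have "compactin Te (Te closure_of B)"
    using assms by (simp add: semi_montel_def rel_compact_in_def)
  then have "precompact_in Te (Te closure_of B)"
    by (rule precompact_in_if_compactin_Te)
  moreover have "B \<subseteq> Te closure_of B"
    by (rule closure_of_subset) (simp add: topspace_Te)
  ultimately show ?thesis
    using totally_bounded_if_precompact_in_Te by (fastforce simp: seminorm_totally_bounded_def)
qed

lemma totally_bounded_if_schwartz_space:
  assumes "schwartz_space sc Te" and "tvs_bounded sc Te B"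
  shows "seminorm_totally_bounded (p \<alpha>) B"
  unfolding seminorm_totally_bounded_def
proof (intro allI impI)
  fix \<eta> :: real assume "\<eta> > 0"
  define U where "U = {y. p \<alpha> y < \<eta>}"
  have "openin Te U" "0 \<in> U"
    using \<open>\<eta> > 0\<close> by (simp_all add: U_def openin_Te_ball0 p_zero)
  then obtain V where "openin Te V" "0 \<in> V"
    and V: "\<And>\<epsilon>::real. \<epsilon> > 0 \<Longrightarrow> \<exists>F. finite F \<and> V \<subseteq> (\<Union>x\<in>F. (\<lambda>u. x + u) ` (sc (of_real \<epsilon>) ` U))"
    using assms(1) unfolding schwartz_space_def by blast
  then obtain r where "r > 0" and r: "\<And>c. r \<le> norm c \<Longrightarrow> B \<subseteq> sc c ` V"
    using assms(2) unfolding tvs_bounded_def by blast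
  obtain F where "finite F" and F: "V \<subseteq> (\<Union>x\<in>F. (\<lambda>u. x + u) ` (sc (of_real (1 / r)) ` U))"
    using V[of "1 / r"] \<open>r > 0\<close> by auto
  have "\<exists>y\<in>sc (of_real r) ` F. p \<alpha> (v - y) \<le> \<eta>" if "v \<in> B" for v
  proof -
    obtain w where "w \<in> V" "v = sc (of_real r) w"
      using r[of "of_real r"] \<open>r > 0\<close> \<open>v \<in> B\<close> by auto
    then obtain y u where "y \<in> F" "u \<in> U" "v = sc (of_real r) (y + sc (of_real (1 / r)) u)"
      using F by blast
    moreover have "sc (of_real r) (y + sc (of_real (1 / r)) u) = sc (of_real r) y + u"
      using vector_space \<open>r > 0\<close>
      by (simp add: module_iff_vector_space module.scale_right_distrib module.scale_scale
          module.scale_one flip: of_real_mult)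
    ultimately show ?thesis
      by (intro bexI[of _ "sc (of_real r) y"]) (auto simp: U_def)
  qed
  with \<open>finite F\<close> show "\<exists>F. finite F \<and> (\<forall>v\<in>B. \<exists>y\<in>F. p \<alpha> (v - y) \<le> \<eta>)"
    by blast
qed

end

section \<open>The weighted spaces FV\<close>

lemma bdd_above_image_le_add:
  fixes f g h :: "'a \<Rightarrow> real"
  assumes "bdd_above (f ` S)" "bdd_above (g ` S)" "\<And>x. x \<in> S \<Longrightarrow> h x \<le> f x + g x"
  shows "bdd_above (h ` S)"
proof -
  obtain M1 M2 where "\<And>x. x \<in> S \<Longrightarrow> f x \<le> M1" "\<And>x. x \<in> S \<Longrightarrow> g x \<le> M2"
    using assms(1,2) by (auto simp: bdd_above_def)
  with assms(3) have "\<And>x. x \<in> S \<Longrightarrow> h x \<le> M1 + M2"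
    by (meson add_mono order_trans)
  then show ?thesis by (rule bdd_aboveI2)
qed

lemma bdd_above_image_le_scale:
  fixes f h :: "'a \<Rightarrow> real"
  assumes "bdd_above (f ` S)" "0 \<le> a" "\<And>x. x \<in> S \<Longrightarrow> h x \<le> a * f x"
  shows "bdd_above (h ` S)"
proof -
  obtain M where "\<And>x. x \<in> S \<Longrightarrow> f x \<le> M"
    using assms(1) by (auto simp: bdd_above_def)
  with assms(2,3) have "\<And>x. x \<in> S \<Longrightarrow> h x \<le> a * M"
    by (meson mult_left_mono order_trans)
  then show ?thesis by (rule bdd_aboveI2)
qed


locale strong_generator = seminormed_space sc p
  for sc :: "'k::real_normed_field \<Rightarrow> 'e::ab_group_add \<Rightarrow> 'e" and p :: "'a \<Rightarrow> 'e \<Rightarrow> real" +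
  fixes \<omega> :: "'m \<Rightarrow> 'x set" and \<nu> :: "'j \<Rightarrow> 'm \<Rightarrow> 'x \<Rightarrow> real"
    and APK :: "('w \<Rightarrow> 'k) set" and domK :: "'m \<Rightarrow> ('w \<Rightarrow> 'k) set"
    and TK :: "'m \<Rightarrow> ('w \<Rightarrow> 'k) \<Rightarrow> ('x \<Rightarrow> 'k)"
    and APE :: "('w \<Rightarrow> 'e) set" and domE :: "'m \<Rightarrow> ('w \<Rightarrow> 'e) set"
    and TE :: "'m \<Rightarrow> ('w \<Rightarrow> 'e) \<Rightarrow> ('x \<Rightarrow> 'e)"
  assumes \<omega>_nonempty: "\<And>m. \<omega> m \<noteq> {}"
    and \<nu>_nonneg: "\<And>j m x. x \<in> \<omega> m \<Longrightarrow> 0 \<le> \<nu> j m x"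
    and APK_subspace: "fun_subspace (*) APK"
    and domK_subspace: "\<And>m. fun_subspace (*) (domK m)"
    and TK_linear: "\<And>m. lin_on (*) (domK m) (\<omega> m) (TK m)"
    and FVk_hausdorff: "sn_hausdorff (FVK APK domK TK \<omega> \<nu>) (FVK_sn TK \<omega> \<nu>)"
    and FVk_directed: "sn_directed (FVK APK domK TK \<omega> \<nu>) (FVK_sn TK \<omega> \<nu>)"
    and strong: "\<And>e' f m. e' \<in> dual_space sc p \<Longrightarrow> f \<in> FVE p APE domE TE \<omega> \<nu> \<Longrightarrow>
       e' \<circ> f \<in> APK \<and> e' \<circ> f \<in> domK m \<and> (\<forall>x\<in>\<omega> m. TK m (e' \<circ> f) x = e' (TE m f x))"
begin

abbreviation "FVk \<equiv> FVK APK domK TK \<omega> \<nu>"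
abbreviation "qk \<equiv> FVK_sn TK \<omega> \<nu>"
abbreviation "Tk \<equiv> sn_top FVk qk"
abbreviation "FVe \<equiv> FVE p APE domE TE \<omega> \<nu>"

definition N :: "('w \<Rightarrow> 'e) \<Rightarrow> 'j \<Rightarrow> 'm \<Rightarrow> 'e set" where
  "N f j m = {sc (of_real (\<nu> j m x)) (TE m f x) | x. x \<in> \<omega> m}"

lemma FVk_iff:
  "g \<in> FVk \<longleftrightarrow> g \<in> APK \<and> (\<forall>m. g \<in> domK m) \<and> (\<forall>j m. bdd_above ((\<lambda>x. norm (TK m g x) * \<nu> j m x) ` \<omega> m))"
  by (simp add: FVK_def)

lemma TK_add: "g \<in> domK m \<Longrightarrow> h \<in> domK m \<Longrightarrow> x \<in> \<omega> m \<Longrightarrow> TK m (\<lambda>w. g w + h w) x = TK m g x + TK m h x"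
  and TK_scale: "g \<in> domK m \<Longrightarrow> x \<in> \<omega> m \<Longrightarrow> TK m (\<lambda>w. c * g w) x = c * TK m g x"
  using TK_linear[of m] unfolding lin_on_def by blast+

lemma FVk_add:
  assumes "g \<in> FVk" "h \<in> FVk"
  shows "(\<lambda>w. g w + h w) \<in> FVk"
proof -
  from assms have g: "g \<in> APK" "\<And>m. g \<in> domK m" "\<And>j m. bdd_above ((\<lambda>x. norm (TK m g x) * \<nu> j m x) ` \<omega> m)"
    and h: "h \<in> APK" "\<And>m. h \<in> domK m" "\<And>j m. bdd_above ((\<lambda>x. norm (TK m h x) * \<nu> j m x) ` \<omega> m)"
    by (simp_all add: FVk_iff)
  have "norm (TK m (\<lambda>w. g w + h w) x) * \<nu> j m x \<le> norm (TK m g x) * \<nu> j m x + norm (TK m h x) * \<nu> j m x"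
    if "x \<in> \<omega> m" for j m x
    using that g(2) h(2) \<nu>_nonneg[OF that, of j] norm_triangle_ineq[of "TK m g x" "TK m h x"]
    by (simp add: TK_add mult_right_mono flip: distrib_right)
  then have "bdd_above ((\<lambda>x. norm (TK m (\<lambda>w. g w + h w) x) * \<nu> j m x) ` \<omega> m)" for j m
    by (rule bdd_above_image_le_add[OF g(3) h(3)])
  moreover have "(\<lambda>w. g w + h w) \<in> APK" "(\<lambda>w. g w + h w) \<in> domK m" for m
    using APK_subspace domK_subspace[of m] g h by (simp_all add: fun_subspace_def)
  ultimately show ?thesis by (simp add: FVk_iff)
qed

lemma FVk_scale:
  assumes "g \<in> FVk"
  shows "(\<lambda>w. c * g w) \<in> FVk"
proof -
  from assms have g: "g \<in> APK" "\<And>m. g \<in> domK m" "\<And>j m. bdd_above ((\<lambda>x. norm (TK m g x) * \<nu> j m x) ` \<omega> m)"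
    by (simp_all add: FVk_iff)
  have "norm (TK m (\<lambda>w. c * g w) x) * \<nu> j m x \<le> norm c * (norm (TK m g x) * \<nu> j m x)"
    if "x \<in> \<omega> m" for j m x
    using that g(2) by (simp add: TK_scale norm_mult)
  then have "bdd_above ((\<lambda>x. norm (TK m (\<lambda>w. c * g w) x) * \<nu> j m x) ` \<omega> m)" for j m
    by (rule bdd_above_image_le_scale[OF g(3) norm_ge_zero])
  moreover have "(\<lambda>w. c * g w) \<in> APK" "(\<lambda>w. c * g w) \<in> domK m" for m
    using APK_subspace domK_subspace[of m] g by (simp_all add: fun_subspace_def)
  ultimately show ?thesis by (simp add: FVk_iff)
qed

lemma fun_diff_eq_add_scale: "g - h = (\<lambda>w. g w + (- 1) * h w)" for g h :: "'w \<Rightarrow> 'k"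
  by (simp add: fun_eq_iff)

lemma FVk_diff: "g \<in> FVk \<Longrightarrow> h \<in> FVk \<Longrightarrow> g - h \<in> FVk"
  unfolding fun_diff_eq_add_scale by (intro FVk_add FVk_scale)

lemma TK_diff:
  assumes "g \<in> FVk" "h \<in> FVk" "x \<in> \<omega> m"
  shows "TK m (g - h) x = TK m g x - TK m h x"
proof -
  have "(\<lambda>w. (- 1) * h w) \<in> FVk" by (rule FVk_scale[OF assms(2)])
  with assms(1,2) have "(\<lambda>w. (- 1) * h w) \<in> domK m" "g \<in> domK m" "h \<in> domK m"
    unfolding FVk_iff by blast+
  then show ?thesis
    unfolding fun_diff_eq_add_scale using assms(3) by (simp only: TK_add TK_scale) simp
qed

lemma qk_upper: "g \<in> FVk \<Longrightarrow> x \<in> \<omega> m \<Longrightarrow> norm (TK m g x) * \<nu> j m x \<le> qk (j, m) g"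
  unfolding FVK_sn_def by (auto simp: FVk_iff intro: cSUP_upper)

lemma qk_least: "(\<And>x. x \<in> \<omega> m \<Longrightarrow> norm (TK m g x) * \<nu> j m x \<le> B) \<Longrightarrow> qk (j, m) g \<le> B"
  unfolding FVK_sn_def using \<omega>_nonempty by (auto intro: cSUP_least)

lemma qk_nonneg: "g \<in> FVk \<Longrightarrow> 0 \<le> qk i g"
proof (cases i)
  case (Pair j m)
  moreover obtain x where "x \<in> \<omega> m" using \<omega>_nonempty by blast
  moreover assume "g \<in> FVk"
  ultimately show ?thesis
    using qk_upper[of g x m j] \<nu>_nonneg[of x m j] by (smt (verit) mult_nonneg_nonneg norm_ge_zero)
qed

lemma qk_add_le:
  assumes "g \<in> FVk" "h \<in> FVk"
  shows "qk i (g + h) \<le> qk i g + qk i h"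
proof (cases i)
  case (Pair j m)
  have "norm (TK m (g + h) x) * \<nu> j m x \<le> qk (j, m) g + qk (j, m) h" if "x \<in> \<omega> m" for x
  proof -
    have "norm (TK m (g + h) x) * \<nu> j m x \<le> (norm (TK m g x) + norm (TK m h x)) * \<nu> j m x"
      using assms that \<nu>_nonneg[OF that, of j] norm_triangle_ineq[of "TK m g x" "TK m h x"]
      by (intro mult_right_mono) (simp_all add: plus_fun_def FVk_iff TK_add)
    also have "\<dots> \<le> qk (j, m) g + qk (j, m) h"
      using qk_upper[OF assms(1) that, of j] qk_upper[OF assms(2) that, of j] by (simp add: distrib_right)
    finally show ?thesis .
  qed
  then show ?thesis using Pair by (simp add: qk_least)
qed

lemma qk_scale_le:
  assumes "g \<in> FVk"
  shows "qk i (\<lambda>w. c * g w) \<le> norm c * qk i g"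
proof (cases i)
  case (Pair j m)
  have "norm (TK m (\<lambda>w. c * g w) x) * \<nu> j m x \<le> norm c * qk (j, m) g" if "x \<in> \<omega> m" for x
    using assms that qk_upper[OF assms that, of j]
    by (simp add: FVk_iff TK_scale norm_mult mult.assoc mult_left_mono)
  then show ?thesis using Pair by (simp add: qk_least)
qed

lemma TK_minus: "h \<in> FVk \<Longrightarrow> x \<in> \<omega> m \<Longrightarrow> TK m (- h) x = - TK m h x"
  using TK_scale[of h m x "- 1"] by (simp add: FVk_iff fun_Compl_def)

lemma qk_minus: "h \<in> FVk \<Longrightarrow> qk i (- h) = qk i h"
  by (cases i) (simp add: FVK_sn_def TK_minus cong: SUP_cong)

lemma qk_zero: "qk i 0 = 0"
proof (cases i)
  case (Pair j m)
  have "(\<lambda>w. 0) \<in> domK m" using domK_subspace[of m] by (simp add: fun_subspace_def)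
  then have "TK m 0 x = 0" if "x \<in> \<omega> m" for x
    using TK_scale[of "\<lambda>w. 0" m x 0] that by (simp add: zero_fun_def)
  then show ?thesis using Pair \<omega>_nonempty[of m] by (simp add: FVK_sn_def cong: SUP_cong)
qed

lemma Hausdorff_space_Tk: "Hausdorff_space Tk"
  by (rule Hausdorff_space_sn_top[OF FVk_diff qk_add_le qk_minus qk_nonneg qk_zero FVk_hausdorff])

lemma openin_Tk_nbhd: "openin Tk U \<Longrightarrow> g \<in> U \<Longrightarrow> \<exists>i \<delta>. \<delta> > 0 \<and> (\<forall>y\<in>FVk. qk i (y - g) < \<delta> \<longrightarrow> y \<in> U)"
  by (rule openin_sn_top_nbhd[OF FVk_diff qk_add_le FVk_directed])

lemma TK_comp: "e' \<in> E' \<Longrightarrow> f \<in> FVe \<Longrightarrow> x \<in> \<omega> m \<Longrightarrow> TK m (e' \<circ> f) x = e' (TE m f x)"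
  using strong by blast

lemma comp_in_FVk:
  assumes "e' \<in> E'" "f \<in> FVe"
  shows "e' \<circ> f \<in> FVk"
proof -
  obtain \<beta> C where "C \<ge> 0" and C: "\<And>x. norm (e' x) \<le> C * p \<beta> x"
    using dual_space_bound[OF assms(1)] by blast
  have bound: "norm (TK m (e' \<circ> f) x) * \<nu> j m x \<le> C * (p \<beta> (TE m f x) * \<nu> j m x)"
    if "x \<in> \<omega> m" for j m x
    using C[of "TE m f x"] \<nu>_nonneg[OF that, of j] TK_comp[OF assms that]
    by (simp add: mult.assoc[symmetric] mult_right_mono)
  have "bdd_above ((\<lambda>x. p \<beta> (TE m f x) * \<nu> j m x) ` \<omega> m)" for j m
    using assms(2) by (simp add: FVE_def)
  then have "bdd_above ((\<lambda>x. norm (TK m (e' \<circ> f) x) * \<nu> j m x) ` \<omega> m)" for j m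
    using \<open>C \<ge> 0\<close> bound by (rule bdd_above_image_le_scale)
  with strong[OF assms] show ?thesis by (simp add: FVk_iff)
qed

lemma FVe_subset_FV_sigma: "FVe \<subseteq> FV_sigma E' FVk"
  using comp_in_FVk by (auto simp: FV_sigma_def)

lemma qk_comp_polar_ball_le:
  assumes "e' \<in> polar_ball \<alpha>" "f \<in> FVe"
  shows "qk (j, m) (e' \<circ> f) \<le> (SUP x\<in>\<omega> m. p \<alpha> (TE m f x) * \<nu> j m x)"
proof (rule qk_least)
  fix x assume "x \<in> \<omega> m"
  moreover have "e' \<in> E'" using assms(1) polar_ball_subset_dual by blast
  ultimately have "norm (TK m (e' \<circ> f) x) * \<nu> j m x \<le> p \<alpha> (TE m f x) * \<nu> j m x"
    using assms polar_ball_bound[OF assms(1)] \<nu>_nonneg[of x m j]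
    by (simp add: TK_comp mult_right_mono)
  also have "\<dots> \<le> (SUP x\<in>\<omega> m. p \<alpha> (TE m f x) * \<nu> j m x)"
    using \<open>x \<in> \<omega> m\<close> assms(2) by (intro cSUP_upper) (auto simp: FVE_def)
  finally show "norm (TK m (e' \<circ> f) x) * \<nu> j m x \<le> (SUP x\<in>\<omega> m. p \<alpha> (TE m f x) * \<nu> j m x)" .
qed

lemma TK_comp_diff_le:
  assumes "e' \<in> polar_ball \<alpha>" "e0 \<in> polar_ball \<alpha>" "f \<in> FVe" "g \<in> FVk" "x \<in> \<omega> m"
    and "p \<alpha> (sc (of_real (\<nu> j m x)) (TE m f x) - y) \<le> \<eta>" "norm (e' y - e0 y) < \<eta>"
  shows "norm (TK m ((e' \<circ> f) - g) x) * \<nu> j m x \<le> qk (j, m) ((e0 \<circ> f) - g) + 3 * \<eta>"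
proof -
  define v where "v = sc (of_real (\<nu> j m x)) (TE m f x)"
  define A where "A = of_real (\<nu> j m x) * TK m g x"
  have "e' \<in> E'" "e0 \<in> E'" using assms(1,2) polar_ball_subset_dual by blast+
  have scaled: "norm (TK m ((e \<circ> f) - g) x) * \<nu> j m x = norm (e v - A)" if "e \<in> E'" for e
  proof -
    have "TK m ((e \<circ> f) - g) x = e (TE m f x) - TK m g x"
      using TK_diff[OF comp_in_FVk[OF that assms(3)] assms(4,5)] TK_comp[OF that assms(3,5)] by simp
    moreover have "e v - A = of_real (\<nu> j m x) * (e (TE m f x) - TK m g x)"
      using that by (simp add: v_def A_def dual_space_homogeneous algebra_simps)
    ultimately show ?thesis
      using \<nu>_nonneg[OF assms(5), of j] by (simp add: norm_mult mult.commute)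
  qed
  have "norm (TK m ((e' \<circ> f) - g) x) * \<nu> j m x \<le> norm (e0 v - A) + norm (e' v - e0 v)"
    using norm_triangle_ineq[of "e0 v - A" "e' v - e0 v"] scaled[OF \<open>e' \<in> E'\<close>] by simp
  moreover have "norm (e0 v - A) \<le> qk (j, m) ((e0 \<circ> f) - g)"
    using qk_upper[OF FVk_diff[OF comp_in_FVk[OF \<open>e0 \<in> E'\<close> assms(3)] assms(4)] assms(5), of j]
      scaled[OF \<open>e0 \<in> E'\<close>] by simp
  moreover have "norm (e' v - e0 v) \<le> 3 * \<eta>"
    using polar_ball_close[OF assms(1,2)] assms(6,7) by (simp add: v_def)
  ultimately show ?thesis by linarith
qed

lemma continuous_map_comp_polar_ball:
  assumes f: "f \<in> FVe" and tb: "\<And>j m. seminorm_totally_bounded (p \<alpha>) (N f j m)"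
  shows "continuous_map (subtopology euclidean (polar_ball \<alpha>)) Tk (\<lambda>e'. e' \<circ> f)"
proof -
  define \<B> where "\<B> = {{y. qk i (y - x) < e} | i x e. x \<in> FVk \<and> e > 0}"
  have comp: "e' \<circ> f \<in> FVk" if "e' \<in> polar_ball \<alpha>" for e'
    using polar_ball_subset_dual that by (intro comp_in_FVk[OF _ f]) blast
  have "continuous_map (subtopology euclidean (polar_ball \<alpha>)) (topology_generated_by \<B>) (\<lambda>e'. e' \<circ> f)"
  proof (rule continuous_map_topology_generated_by)
    fix e' assume "e' \<in> topspace (subtopology euclidean (polar_ball \<alpha>))"
    then have "{y. qk undefined (y - (e' \<circ> f)) < 1} \<in> \<B>"
      using comp unfolding \<B>_def mem_Collect_eq
      by (intro exI[of _ undefined] exI[of _ "e' \<circ> f"] exI[of _ "1::real"]) simp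
    moreover have "e' \<circ> f \<in> {y. qk undefined (y - (e' \<circ> f)) < 1}"
      by (simp add: qk_zero)
    ultimately show "e' \<circ> f \<in> \<Union>\<B>" by blast
  next
    fix b assume "b \<in> \<B>"
    then have "\<exists>i g e. b = {y. qk i (y - g) < e} \<and> g \<in> FVk" by (auto simp: \<B>_def)
    then obtain j m g e where b: "b = {y. qk (j, m) (y - g) < e}" and "g \<in> FVk"
      by (metis surj_pair)
    show "openin (subtopology euclidean (polar_ball \<alpha>))
        {e' \<in> topspace (subtopology euclidean (polar_ball \<alpha>)). e' \<circ> f \<in> b}"
    proof (subst openin_subopen, intro ballI)
      fix e0 assume "e0 \<in> {e' \<in> topspace (subtopology euclidean (polar_ball \<alpha>)). e' \<circ> f \<in> b}"
      then have "e0 \<in> polar_ball \<alpha>" and e0: "qk (j, m) ((e0 \<circ> f) - g) < e" by (simp_all add: b)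
      define \<eta> where "\<eta> = (e - qk (j, m) ((e0 \<circ> f) - g)) / 4"
      have "\<eta> > 0" using e0 by (simp add: \<eta>_def)
      then obtain F where "finite F" and F: "\<forall>v\<in>N f j m. \<exists>y\<in>F. p \<alpha> (v - y) \<le> \<eta>"
        using tb[of j m] unfolding seminorm_totally_bounded_def by meson
      \<comment> \<open>Closeness to \<open>e0\<close> on the finite net \<open>F\<close> of \<open>N f j m\<close> gives closeness on all of it.\<close>
      define W where "W = (\<Inter>y\<in>F. {e'::'e \<Rightarrow> 'k. norm (e' y - e0 y) < \<eta>}) \<inter> polar_ball \<alpha>"
      have "open (\<Inter>y\<in>F. {e'::'e \<Rightarrow> 'k. norm (e' y - e0 y) < \<eta>})"
        by (intro open_INT \<open>finite F\<close> ballI open_Collect_less continuous_on_norm continuous_on_diff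
            continuous_on_product_coordinates continuous_on_const)
      then have "openin (subtopology euclidean (polar_ball \<alpha>)) W"
        unfolding W_def openin_subtopology by auto
      moreover have "e0 \<in> W" using \<open>e0 \<in> polar_ball \<alpha>\<close> \<open>\<eta> > 0\<close> by (simp add: W_def)
      moreover have "e' \<circ> f \<in> b" if "e' \<in> W" for e'
      proof -
        have "e' \<in> polar_ball \<alpha>" and close: "\<And>y. y \<in> F \<Longrightarrow> norm (e' y - e0 y) < \<eta>"
          using that by (simp_all add: W_def)
        have "norm (TK m ((e' \<circ> f) - g) x) * \<nu> j m x \<le> qk (j, m) ((e0 \<circ> f) - g) + 3 * \<eta>"
          if "x \<in> \<omega> m" for x
        proof -
          have "sc (of_real (\<nu> j m x)) (TE m f x) \<in> N f j m"
            using that by (auto simp: N_def)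
          with F obtain y where "y \<in> F" "p \<alpha> (sc (of_real (\<nu> j m x)) (TE m f x) - y) \<le> \<eta>"
            by blast
          then show ?thesis
            by (intro TK_comp_diff_le[OF \<open>e' \<in> polar_ball \<alpha>\<close> \<open>e0 \<in> polar_ball \<alpha>\<close> f \<open>g \<in> FVk\<close> that]
                close)
        qed
        then have "qk (j, m) ((e' \<circ> f) - g) \<le> qk (j, m) ((e0 \<circ> f) - g) + 3 * \<eta>"
          by (rule qk_least)
        also have "\<dots> < e" using e0 by (simp add: \<eta>_def field_simps)
        finally show ?thesis by (simp add: b)
      qed
      moreover have "W \<subseteq> polar_ball \<alpha>" by (simp add: W_def)
      ultimately show "\<exists>T. openin (subtopology euclidean (polar_ball \<alpha>)) T \<and> e0 \<in> T \<and>
          T \<subseteq> {e' \<in> topspace (subtopology euclidean (polar_ball \<alpha>)). e' \<circ> f \<in> b}"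
        by (intro exI[of _ W]) auto
    qed
  qed
  then have "continuous_map (subtopology euclidean (polar_ball \<alpha>))
      (subtopology (topology_generated_by \<B>) FVk) (\<lambda>e'. e' \<circ> f)"
    using comp by (intro continuous_map_into_subtopology) auto
  then show ?thesis by (simp add: sn_top_def \<B>_def)
qed

lemma rel_compact_comp_polar_ball:
  assumes "f \<in> FVe" and "\<And>j m. seminorm_totally_bounded (p \<alpha>) (N f j m)"
  shows "rel_compact_in Tk ((\<lambda>e'. e' \<circ> f) ` polar_ball \<alpha>)"
proof -
  have "compactin (subtopology euclidean (polar_ball \<alpha>)) (polar_ball \<alpha>)"
    by (simp add: compactin_subtopology compact_polar_ball)
  then have "compactin Tk ((\<lambda>e'. e' \<circ> f) ` polar_ball \<alpha>)"
    using continuous_map_comp_polar_ball[OF assms] by (rule image_compactin)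
  moreover from this have "closedin Tk ((\<lambda>e'. e' \<circ> f) ` polar_ball \<alpha>)"
    by (rule compactin_imp_closedin[OF Hausdorff_space_Tk])
  ultimately show ?thesis by (simp add: rel_compact_in_def closure_of_closedin)
qed

lemma mem_N_seminorm:
  assumes "v \<in> N f j m"
  shows "\<exists>x\<in>\<omega> m. v = sc (of_real (\<nu> j m x)) (TE m f x) \<and> p \<beta> v = p \<beta> (TE m f x) * \<nu> j m x"
  using assms \<nu>_nonneg by (auto simp: N_def p_scale_of_real mult.commute)

lemma tvs_bounded_N:
  assumes "f \<in> FVe"
  shows "tvs_bounded sc Te (N f j m)"
proof (rule tvs_bounded_Te)
  fix \<beta>
  have "bdd_above ((\<lambda>x. p \<beta> (TE m f x) * \<nu> j m x) ` \<omega> m)"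
    using assms by (simp add: FVE_def)
  then show "bdd_above (p \<beta> ` N f j m)"
    by (rule bdd_above_mono) (auto dest: mem_N_seminorm)
qed

lemma tvs_bounded_comp_polar_ball:
  assumes "f \<in> FVe"
  shows "tvs_bounded (\<lambda>c (g::'w \<Rightarrow> 'k). \<lambda>w. c * g w) Tk ((\<lambda>e'. e' \<circ> f) ` polar_ball \<alpha>)"
proof (rule tvs_bounded_sn_top)
  show "(\<lambda>e'. e' \<circ> f) ` polar_ball \<alpha> \<subseteq> FVk"
    using comp_in_FVk[OF _ assms] polar_ball_subset_dual by blast
  show "bdd_above (qk i ` (\<lambda>e'. e' \<circ> f) ` polar_ball \<alpha>)" for i
  proof (cases i)
    case (Pair j m)
    then show ?thesis
      using qk_comp_polar_ball_le[OF _ assms] by (auto intro!: bdd_aboveI2)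
  qed
qed (use openin_Tk_nbhd[of _ 0] FVk_scale qk_scale_le in \<open>auto simp: fun_eq_iff\<close>)

lemma FV_kappa_if_totally_bounded:
  assumes "f \<in> FVe" and "\<And>\<alpha> j m. seminorm_totally_bounded (p \<alpha>) (N f j m)"
  shows "f \<in> FV_kappa sc p FVk Tk"
proof -
  have "f \<in> FV_sigma E' FVk" using FVe_subset_FV_sigma assms(1) by blast
  moreover have "rel_compact_in Tk ((\<lambda>e'. e' \<circ> f) ` polar_ball \<alpha>)" for \<alpha>
    using assms by (rule rel_compact_comp_polar_ball)
  ultimately show ?thesis by (simp add: FV_kappa_def)
qed

lemma FV_kappa_if_FVk_semi_montel:
  assumes "semi_montel (\<lambda>c (g::'w \<Rightarrow> 'k). \<lambda>w. c * g w) FVk Tk" and "f \<in> FVe"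
  shows "f \<in> FV_kappa sc p FVk Tk"
proof -
  have "(\<lambda>e'. e' \<circ> f) ` polar_ball \<alpha> \<subseteq> FVk" for \<alpha>
    using comp_in_FVk[OF _ assms(2)] polar_ball_subset_dual by blast
  then have "rel_compact_in Tk ((\<lambda>e'. e' \<circ> f) ` polar_ball \<alpha>)" for \<alpha>
    using assms(1) tvs_bounded_comp_polar_ball[OF assms(2)] unfolding semi_montel_def by blast
  moreover have "f \<in> FV_sigma E' FVk" using FVe_subset_FV_sigma assms(2) by blast
  ultimately show ?thesis by (simp add: FV_kappa_def)
qed

lemma FV_kappa_if_precompact_N:
  assumes "\<forall>f\<in>FVe. \<forall>j m. \<exists>K. precompact_in Te K \<and> {sc (of_real (\<nu> j m x)) (TE m f x) | x. x \<in> \<omega> m} \<subseteq> K"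
    and "f \<in> FVe"
  shows "f \<in> FV_kappa sc p FVk Tk"
proof (rule FV_kappa_if_totally_bounded[OF assms(2)])
  fix \<alpha> j m
  have "\<exists>K. precompact_in Te K \<and> N f j m \<subseteq> K"
    using bspec[OF assms] by (simp add: N_def)
  then obtain K where "precompact_in Te K" "N f j m \<subseteq> K" by blast
  then show "seminorm_totally_bounded (p \<alpha>) (N f j m)"
    using totally_bounded_if_precompact_in_Te seminorm_totally_bounded_subset by blast
qed

lemma FV_kappa_if_E_semi_montel:
  "semi_montel sc UNIV Te \<Longrightarrow> f \<in> FVe \<Longrightarrow> f \<in> FV_kappa sc p FVk Tk"
  by (intro FV_kappa_if_totally_bounded totally_bounded_if_semi_montel tvs_bounded_N)

lemma FV_kappa_if_E_schwartz:
  "schwartz_space sc Te \<Longrightarrow> f \<in> FVe \<Longrightarrow> f \<in> FV_kappa sc p FVk Tk"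
  by (intro FV_kappa_if_totally_bounded totally_bounded_if_schwartz_space tvs_bounded_N)

lemma FV_kappa_if_small_outside_precompact:
  fixes \<KK> :: "'X set set" and \<pi> :: "'x \<Rightarrow> 'X"
  assumes "\<forall>f\<in>FVe. \<forall>\<epsilon>>0. \<forall>j m \<alpha>. \<exists>K\<in>\<KK>.
      (\<exists>\<delta><\<epsilon>. \<forall>x\<in>\<omega> m. \<pi> x \<notin> K \<longrightarrow> p \<alpha> (TE m f x) * \<nu> j m x \<le> \<delta>) \<and>
      precompact_in Te {sc (of_real (\<nu> j m x)) (TE m f x) | x. x \<in> \<omega> m \<and> \<pi> x \<in> K}"
    and "f \<in> FVe"
  shows "f \<in> FV_kappa sc p FVk Tk"
proof (rule FV_kappa_if_totally_bounded[OF assms(2)])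
  fix \<alpha> j m
  show "seminorm_totally_bounded (p \<alpha>) (N f j m)"
  proof (rule seminorm_totally_bounded_if_small_outside)
    fix \<eta> :: real assume "\<eta> > 0"
    then obtain K \<delta> where "\<delta> < \<eta>" and small: "\<forall>x\<in>\<omega> m. \<pi> x \<notin> K \<longrightarrow> p \<alpha> (TE m f x) * \<nu> j m x \<le> \<delta>"
      and pre: "precompact_in Te {sc (of_real (\<nu> j m x)) (TE m f x) | x. x \<in> \<omega> m \<and> \<pi> x \<in> K}"
      using assms by meson
    have "v \<in> {sc (of_real (\<nu> j m x)) (TE m f x) | x. x \<in> \<omega> m \<and> \<pi> x \<in> K} \<or> p \<alpha> v \<le> \<eta>"
      if v: "v \<in> N f j m" for v
    proof -
      obtain x where "x \<in> \<omega> m" "v = sc (of_real (\<nu> j m x)) (TE m f x)"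
        and "p \<alpha> v = p \<alpha> (TE m f x) * \<nu> j m x"
        using mem_N_seminorm[OF v, of \<alpha>] by blast
      then show ?thesis
        using small \<open>\<delta> < \<eta>\<close> by (cases "\<pi> x \<in> K") auto
    qed
    with totally_bounded_if_precompact_in_Te[OF pre]
    show "\<exists>A'. seminorm_totally_bounded (p \<alpha>) A' \<and> (\<forall>v\<in>N f j m. v \<in> A' \<or> p \<alpha> v \<le> \<eta>)"
      by blast
  qed
qed

end

theorem lemma3p13:
  fixes sc :: "'k::real_normed_field \<Rightarrow> 'e::ab_group_add \<Rightarrow> 'e"
    and p :: "'a \<Rightarrow> 'e \<Rightarrow> real"
    and \<omega> :: "'m \<Rightarrow> 'x set"
    and \<nu> :: "'j \<Rightarrow> 'm \<Rightarrow> 'x \<Rightarrow> real"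
    and APK :: "('w \<Rightarrow> 'k) set" and domK :: "'m \<Rightarrow> ('w \<Rightarrow> 'k) set"
    and TK :: "'m \<Rightarrow> ('w \<Rightarrow> 'k) \<Rightarrow> ('x \<Rightarrow> 'k)"
    and APE :: "('w \<Rightarrow> 'e) set" and domE :: "'m \<Rightarrow> ('w \<Rightarrow> 'e) set"
    and TE :: "'m \<Rightarrow> ('w \<Rightarrow> 'e) \<Rightarrow> ('x \<Rightarrow> 'e)"
  defines "FVk \<equiv> FVK APK domK TK \<omega> \<nu>"
    and "qk \<equiv> FVK_sn TK \<omega> \<nu>"
    and "Tk \<equiv> sn_top (FVK APK domK TK \<omega> \<nu>) (FVK_sn TK \<omega> \<nu>)"
    and "FVe \<equiv> FVE p APE domE TE \<omega> \<nu>"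
    and "qe \<equiv> FVE_sn p TE \<omega> \<nu>"
    and "Te \<equiv> sn_top UNIV p"
    and "E' \<equiv> dual_space sc p"
  assumes E_vs: "vector_space sc"
    and E_seminorms: "\<forall>\<alpha>. is_seminorm sc (p \<alpha>)"
    and E_hausdorff: "sn_hausdorff UNIV p"
    and E_directed: "sn_directed UNIV p"
    and E_nontrivial: "\<exists>x::'e. x \<noteq> 0"
    and \<omega>_ne: "\<forall>m. \<omega> m \<noteq> {}"
    and \<nu>_nonneg: "\<forall>j m. \<forall>x\<in>\<omega> m. \<nu> j m x \<ge> 0"
    and \<nu>_pos: "\<forall>m. \<forall>x\<in>\<omega> m. \<exists>j. \<nu> j m x > 0"
    and APK_sub: "fun_subspace (*) APK"
    and APE_sub: "fun_subspace sc APE"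
    and domK_sub: "\<forall>m. fun_subspace (*) (domK m)"
    and domE_sub: "\<forall>m. fun_subspace sc (domE m)"
    and TK_lin: "\<forall>m. lin_on (*) (domK m) (\<omega> m) (TK m)"
    and TE_lin: "\<forall>m. lin_on sc (domE m) (\<omega> m) (TE m)"
    \<comment> \<open>generator: FV(\<Omega>) and FV(\<Omega>,E) are dom-spaces\<close>
    and FVk_hausdorff: "sn_hausdorff FVk qk"
    and FVk_directed: "sn_directed FVk qk"
    and FVk_delta: "\<forall>w. continuous_map Tk euclidean (\<lambda>f. f w)"
    and FVe_hausdorff: "sn_hausdorff FVe qe"
    and FVe_directed: "sn_directed FVe qe"
    \<comment> \<open>the generator is strong\<close>
    and strong: "\<forall>e'\<in>E'. \<forall>f\<in>FVe. \<forall>m. e' \<circ> f \<in> APK \<and> e' \<circ> f \<in> domK m \<and>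
                    (\<forall>x\<in>\<omega> m. TK m (e' \<circ> f) x = e' (TE m f x))"
    and conds:
      "semi_montel (\<lambda>c (f::'w \<Rightarrow> 'k). \<lambda>w. c * f w) FVk Tk
       \<or> (\<forall>f\<in>FVe. \<forall>j m. \<exists>K. precompact_in Te K \<and>
              {sc (of_real (\<nu> j m x)) (TE m f x) | x. x \<in> \<omega> m} \<subseteq> K)
       \<or> (semi_montel sc UNIV Te \<or> schwartz_space sc Te)
       \<or> (\<exists>(\<KK>::'X set set) (\<pi>::'x \<Rightarrow> 'X). \<forall>f\<in>FVe. \<forall>\<epsilon>>0. \<forall>j m \<alpha>. \<exists>K\<in>\<KK>.
              (\<exists>\<delta><\<epsilon>. \<forall>x\<in>\<omega> m. \<pi> x \<notin> K \<longrightarrow> p \<alpha> (TE m f x) * \<nu> j m x \<le> \<delta>) \<and>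
              precompact_in Te {sc (of_real (\<nu> j m x)) (TE m f x) | x. x \<in> \<omega> m \<and> \<pi> x \<in> K})"
  shows "FVe \<subseteq> FV_kappa sc p FVk Tk"
proof -
  interpret strong_generator sc p \<omega> \<nu> APK domK TK APE domE TE
    unfolding strong_generator_def strong_generator_axioms_def seminormed_space_def
    using E_vs E_seminorms E_directed \<omega>_ne \<nu>_nonneg APK_sub domK_sub TK_lin
      FVk_hausdorff FVk_directed strong
    by (simp add: FVk_def qk_def FVe_def E'_def)
  show ?thesis
  proof
    fix f assume "f \<in> FVe"
    with conds show "f \<in> FV_kappa sc p FVk Tk"
      unfolding FVk_def Tk_def FVe_def Te_def
      by (elim disjE exE)
        (erule FV_kappa_if_FVk_semi_montel FV_kappa_if_precompact_N FV_kappa_if_E_semi_montel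
          FV_kappa_if_E_schwartz FV_kappa_if_small_outside_precompact; assumption)+
  qed
qed

end
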